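(* Let $\Lambda$ be the $2$-graph with a single vertex $v$, two edges $f_1,f_2$ of degree $e_1$, one edge $e$ of degree $e_2$, and factorization rules $f_1e=ef_2$ and $ef_1=f_2e$. Every $\xi\in\Lambda^\infty$ can be written uniquely as $\xi=eg_1eg_2eg_3\cdots$ with $g_i\in\{f_1,f_2\}$. Let $(\gamma_n)_{n\ge1}$ be real numbers with $|\gamma_n|<1/2$ and $\sum_n|\gamma_n|<\infty$, and for a finite path $eg_1\cdots eg_n$ set $\alpha_i=\tfrac12+\gamma_i$ if $g_i=f_1$ and $\alpha_i=\tfrac12-\gamma_i$ if $g_i=f_2$; define $\mu(Z(v))=1$ and $\mu(Z(eg_1eg_2\cdots eg_n))=\prod_{i=1}^n\alpha_i$. Then: (a) $\mu$ extends uniquely to a Borel probability measure on $\Lambda^\infty$, and the standard prefixing and coding maps make $(\Lambda^\infty,\mu)$ a $\Lambda$-semibranching function system; (b) $\mu$ is equivalent (mutually absolutely continuous) to the Perron–Frobenius measure $M$ of $\Lambda$, which here is given by $M(Z(\lambda))=2^{-d(\lambda)_1}$; (c) the $\Lambda$-semibranching representation of $C^*(\Lambda)$ on $L^2(\Lambda^\infty,\mu)$ is unitarily equivalent to the standard one on $L^2(\Lambda^\infty,M)$; in particular all such representations (for all admissible sequences $(\gamma_n)$) are unitarily equivalent.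
   Context: $2$-graph: countable small category with degree functor $d:\Lambda\to\mathbb N^2$ with unique factorization; $e_1,e_2$ standard basis of $\mathbb N^2$. Infinite paths $\Lambda^\infty$ (degree-preserving functors from $\Omega_2$), cylinder sets $Z(\lambda)=\{x:x(0,d(\lambda))=\lambda\}$ generate the topology and Borel $\sigma$-algebra. Standard coding maps $\sigma^m(x)(p,q)=x(p+m,q+m)$; standard prefixing maps $\sigma_\lambda:Z(s(\lambda))\to Z(\lambda)$, $x\mapsto\lambda x$. A $\Lambda$-semibranching function system on $(X,\mu)$: measurable sets $D_\lambda$, prefixing maps $\tau_\lambda:D_\lambda\to X$ with ranges $R_\lambda$, coding maps $\tau^m$, such that for each $m$ the $R_\lambda$, $\lambda\in\Lambda^m$, cover $X$ up to a null set and are a.e. disjoint, $\tau^m\circ\tau_\lambda=\mathrm{id}_{D_\lambda}$, $\mu\circ\tau_\lambda\ll\mu$ with $\Phi_{\tau_\lambda}=d(\mu\circ\tau_\lambda)/d\mu>0$ a.e. on $D_\lambda$; $\tau_v=\mathrm{id}$ and $\mu(D_v)>0$; $R_\nu\subseteq D_\lambda$ and $\tau_\lambda\tau_\nu=\tau_{\lambda\nu}$ a.e. when $s(\lambda)=r(\nu)$; $\tau^m\tau^n=\tau^{m+n}$. Its associated ($\Lambda$-semibranching) representation on $L^2(X,\mu)$ is $S_\lambda\xi(x)=\chi_{R_\lambda}(x)\Phi_{\tau_\lambda}(\tau^{d(\lambda)}x)^{-1/2}\xi(\tau^{d(\lambda)}x)$. Perron–Frobenius measure: for finite strongly connected $\Lambda$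 with vertex matrices $A_i(v,w)=|v\Lambda^{e_i}w|$, $M(Z(\lambda))=\rho(\Lambda)^{-d(\lambda)}\kappa_{s(\lambda)}$ where $\rho(\Lambda)=(\rho(A_1),\dots,\rho(A_k))$ and $\kappa$ is the unimodular positive common Perron–Frobenius eigenvector. The standard $\Lambda$-semibranching function system on $(\Lambda^\infty,M)$ uses the standard prefixing and coding maps. *)

theory Defs
  imports "HOL-Probability.Probability" "HOL-Library.Product_Plus" "HOL-Library.Product_Order"
begin

text \<open>A morphism of degree (m,n) is represented by its unique normal form
 k_1 ... k_m e^n (blue edges first), encoded as the triple (m, n, [k_1,...,k_m]) with
 True = f1, False = f2.  Composition moves the e^n of the first factor past the blue edges
 of the second factor, flipping each of them n times.\<close>

type_synonym path = "nat \<times> nat \<times> bool list"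

definition Lam :: "path set" where
  "Lam = {(m, n, k). length k = m}"

definition deg :: "path \<Rightarrow> nat \<times> nat" where
  "deg l = (fst l, fst (snd l))"

definition comp :: "path \<Rightarrow> path \<Rightarrow> path" where
  "comp l \<nu> = (case l of (m, n, k) \<Rightarrow> case \<nu> of (m', n', k') \<Rightarrow>
      (m + m', n + n', k @ map (\<lambda>b. b \<noteq> odd n) k'))"

definition vtx :: path where "vtx = (0, 0, [])"
definition f1 :: path where "f1 = (1, 0, [True])"
definition f2 :: path where "f2 = (1, 0, [False])"
definition ee :: path where "ee = (0, 1, [])"

definition src :: "path \<Rightarrow> path" where "src l = vtx"

lemma factorization_rules: "comp f1 ee = comp ee f2" "comp ee f1 = comp f2 ee"
  by (simp_all add: comp_def f1_def f2_def ee_def)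

definition Lam_deg :: "nat \<times> nat \<Rightarrow> path set" where
  "Lam_deg m = {l \<in> Lam. deg l = m}"

text \<open>Degree preserving functors from Omega_2 = {(p,q). p \<le> q} (componentwise order on N^2,
 with (p,q)(q,r) = (p,r), d(p,q) = q - p) into Lambda; extensional (undefined off Omega_2).\<close>

type_synonym ipath = "nat \<times> nat \<Rightarrow> nat \<times> nat \<Rightarrow> path"

definition Linf :: "ipath set" where
  "Linf = {x. (\<forall>p q. p \<le> q \<longrightarrow> x p q \<in> Lam \<and> deg (x p q) = q - p)
            \<and> (\<forall>p q r. p \<le> q \<and> q \<le> r \<longrightarrow> comp (x p q) (x q r) = x p r)
            \<and> (\<forall>p q. \<not> p \<le> q \<longrightarrow> x p q = undefined)}"

definition Zc :: "path \<Rightarrow> ipath set" where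
  "Zc l = {x \<in> Linf. x 0 (deg l) = l}"

definition Linf_M :: "ipath measure" where
  "Linf_M = sigma Linf (Zc ` Lam)"

definition code_std :: "nat \<times> nat \<Rightarrow> ipath \<Rightarrow> ipath" where
  "code_std m x = (\<lambda>p q. if p \<le> q then x (p + m) (q + m) else undefined)"

definition pre_std :: "path \<Rightarrow> ipath \<Rightarrow> ipath" where
  "pre_std l x = (THE y. y \<in> Linf \<and> y 0 (deg l) = l \<and> code_std (deg l) y = x)"

definition D_std :: "path \<Rightarrow> ipath set" where
  "D_std l = Zc (src l)"

text \<open>The path e g_1 e g_2 ... e g_n (g_i = f1 if g i, f2 otherwise), indices 1..n.\<close>
definition blue :: "bool \<Rightarrow> path" where
  "blue b = (if b then f1 else f2)"

fun std_path :: "(nat \<Rightarrow> bool) \<Rightarrow> nat \<Rightarrow> path" where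
  "std_path g 0 = vtx"
| "std_path g (Suc n) = comp (std_path g n) (comp ee (blue (g (Suc n))))"

definition admissible :: "(nat \<Rightarrow> real) \<Rightarrow> bool" where
  "admissible \<gamma> \<longleftrightarrow> (\<forall>n\<ge>1. \<bar>\<gamma> n\<bar> < 1/2) \<and> summable (\<lambda>n. \<bar>\<gamma> (Suc n)\<bar>)"

definition alpha :: "(nat \<Rightarrow> real) \<Rightarrow> (nat \<Rightarrow> bool) \<Rightarrow> nat \<Rightarrow> real" where
  "alpha \<gamma> g i = (if g i then 1/2 + \<gamma> i else 1/2 - \<gamma> i)"

text \<open>mu is a Borel probability measure on Lambda^infinity with the prescribed cylinder values
 (the case n = 0 gives mu(Z(v)) = 1).\<close>
definition gamma_measure :: "(nat \<Rightarrow> real) \<Rightarrow> ipath measure \<Rightarrow> bool" where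
  "gamma_measure \<gamma> \<mu> \<longleftrightarrow> sets \<mu> = sets Linf_M \<and> prob_space \<mu> \<and>
     (\<forall>n g. emeasure \<mu> (Zc (std_path g n)) = ennreal (\<Prod>i\<in>{1..n}. alpha \<gamma> g i))"

text \<open>Perron-Frobenius measure: M(Z(lambda)) = rho(Lambda)^(-d(lambda)) kappa_(s(lambda)).
 With one vertex the vertex matrices are 1x1: A_i = (|v Lambda^(e_i) v|), so rho(A_i) = A_i
 and the unimodular positive Perron-Frobenius eigenvector is kappa = (1).\<close>
definition vertex_matrix_entry :: "nat \<times> nat \<Rightarrow> real" where
  "vertex_matrix_entry m = real (card (Lam_deg m))"

definition PF_measure :: "ipath measure \<Rightarrow> bool" where
  "PF_measure M \<longleftrightarrow> sets M = sets Linf_M \<and>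
     (\<forall>l\<in>Lam. emeasure M (Zc l) =
        ennreal (vertex_matrix_entry (1,0) powr (- real (fst (deg l)))
               * vertex_matrix_entry (0,1) powr (- real (snd (deg l))) * 1))"

definition pullback :: "'x measure \<Rightarrow> 'x set \<Rightarrow> ('x \<Rightarrow> 'x) \<Rightarrow> 'x measure" where
  "pullback \<mu> D t = measure_of D (sets (restrict_space \<mu> D)) (\<lambda>A. emeasure \<mu> (t ` A))"

definition Phi :: "'x measure \<Rightarrow> (path \<Rightarrow> 'x set) \<Rightarrow> (path \<Rightarrow> 'x \<Rightarrow> 'x) \<Rightarrow> path \<Rightarrow> 'x \<Rightarrow> ennreal" where
  "Phi \<mu> D \<tau> l = RN_deriv (restrict_space \<mu> (D l)) (pullback \<mu> (D l) (\<tau> l))"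

definition SBFS :: "'x measure \<Rightarrow> (path \<Rightarrow> 'x set) \<Rightarrow> (path \<Rightarrow> 'x \<Rightarrow> 'x)
                      \<Rightarrow> (nat \<times> nat \<Rightarrow> 'x \<Rightarrow> 'x) \<Rightarrow> bool" where
  "SBFS \<mu> D \<tau> \<tau>c \<longleftrightarrow>
     (\<forall>l\<in>Lam. D l \<in> sets \<mu> \<and> \<tau> l \<in> measurable (restrict_space \<mu> (D l)) \<mu>
        \<and> (\<forall>A\<in>sets \<mu>. A \<subseteq> D l \<longrightarrow> \<tau> l ` A \<in> sets \<mu>))
   \<and> (\<forall>m. \<tau>c m \<in> measurable \<mu> \<mu>)
   \<and> (\<forall>m. space \<mu> - (\<Union>l\<in>Lam_deg m. \<tau> l ` D l) \<in> null_sets \<mu>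
        \<and> (\<forall>l\<in>Lam_deg m. \<forall>l'\<in>Lam_deg m. l \<noteq> l' \<longrightarrow>
              \<tau> l ` D l \<inter> \<tau> l' ` D l' \<in> null_sets \<mu>))
   \<and> (\<forall>l\<in>Lam. \<forall>x\<in>D l. \<tau>c (deg l) (\<tau> l x) = x)
   \<and> (\<forall>l\<in>Lam. absolutely_continuous (restrict_space \<mu> (D l)) (pullback \<mu> (D l) (\<tau> l))
        \<and> (AE x in restrict_space \<mu> (D l). Phi \<mu> D \<tau> l x > 0))
   \<and> (\<forall>x\<in>D vtx. \<tau> vtx x = x) \<and> emeasure \<mu> (D vtx) > 0
   \<comment> \<open>s(lambda) = r(nu) always holds: there is a single vertex\<close>
   \<and> (\<forall>l\<in>Lam. \<forall>\<nu>\<in>Lam. \<tau> \<nu> ` D \<nu> \<subseteq> D l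
        \<and> (AE x in restrict_space \<mu> (D \<nu>). \<tau> l (\<tau> \<nu> x) = \<tau> (comp l \<nu>) x))
   \<and> (\<forall>m n. \<forall>x\<in>space \<mu>. \<tau>c m (\<tau>c n x) = \<tau>c (m + n) x)"

definition L2 :: "'x measure \<Rightarrow> ('x \<Rightarrow> complex) set" where
  "L2 \<mu> = {f. f \<in> borel_measurable \<mu> \<and> integrable \<mu> (\<lambda>x. (cmod (f x))\<^sup>2)}"

definition sb_op :: "'x measure \<Rightarrow> (path \<Rightarrow> 'x set) \<Rightarrow> (path \<Rightarrow> 'x \<Rightarrow> 'x)
     \<Rightarrow> (nat \<times> nat \<Rightarrow> 'x \<Rightarrow> 'x) \<Rightarrow> path \<Rightarrow> ('x \<Rightarrow> complex) \<Rightarrow> 'x \<Rightarrow> complex" where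
  "sb_op \<mu> D \<tau> \<tau>c l \<xi> x =
     (if x \<in> \<tau> l ` D l
      then complex_of_real (enn2real (Phi \<mu> D \<tau> l (\<tau>c (deg l) x)) powr (-1/2))
           * \<xi> (\<tau>c (deg l) x)
      else 0)"

text \<open>A unitary operator L^2(mu) -> L^2(N), acting on representatives.\<close>
definition unitary_L2 :: "'x measure \<Rightarrow> 'y measure \<Rightarrow> (('x \<Rightarrow> complex) \<Rightarrow> ('y \<Rightarrow> complex)) \<Rightarrow> bool" where
  "unitary_L2 \<mu> N U \<longleftrightarrow>
     (\<forall>\<xi>\<in>L2 \<mu>. U \<xi> \<in> L2 N)
   \<and> (\<forall>\<xi>\<in>L2 \<mu>. \<forall>\<eta>\<in>L2 \<mu>. (AE x in \<mu>. \<xi> x = \<eta> x) \<longrightarrow> (AE y in N. U \<xi> y = U \<eta> y))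
   \<and> (\<forall>\<xi>\<in>L2 \<mu>. \<forall>\<eta>\<in>L2 \<mu>. \<forall>c. AE y in N. U (\<lambda>x. c * \<xi> x + \<eta> x) y = c * U \<xi> y + U \<eta> y)
   \<and> (\<forall>\<xi>\<in>L2 \<mu>. (\<integral>y. (cmod (U \<xi> y))\<^sup>2 \<partial>N) = (\<integral>x. (cmod (\<xi> x))\<^sup>2 \<partial>\<mu>))
   \<and> (\<forall>\<eta>\<in>L2 N. \<exists>\<xi>\<in>L2 \<mu>. AE y in N. U \<xi> y = \<eta> y)"

text \<open>The standard-maps semibranching representations of C*(Lambda) on L^2(mu) and L^2(N)
 are unitarily equivalent: a unitary U with U S^mu_lambda = S^N_lambda U for all lambda
 (equivalence on the generators s_lambda of C*(Lambda)).\<close>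
definition std_rep_equiv :: "ipath measure \<Rightarrow> ipath measure \<Rightarrow> bool" where
  "std_rep_equiv \<mu> N \<longleftrightarrow> (\<exists>U. unitary_L2 \<mu> N U \<and>
     (\<forall>l\<in>Lam. \<forall>\<xi>\<in>L2 \<mu>. AE y in N.
        U (sb_op \<mu> D_std pre_std code_std l \<xi>) y = sb_op N D_std pre_std code_std l (U \<xi>) y))"

end

theory Submission
  imports Defs
begin

text \<open>Everything is computed in coordinates. An infinite path is determined by the bit sequence
  of its horizontal edges read off the normal forms; cylinder sets are the sets of sequences with
  a fixed prefix, and the standard prefixing and coding maps prepend or drop bits, flipping them
  according to the parity of the vertical degree. In these coordinates the Perron-Frobenius measure
  M is fair coin tossing, and prefixing by l scales it by 2^(-d(l)_1).

  The measure mu has density H = prod_j 2 alpha_j with respect to M; the infinite product converges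
  to a strictly positive limit because sum_n |gamma_n| < infinity, and the cylinder values of H dM
  are obtained by dominated convergence from those of the partial products. Any measure H dM with
  H > 0 is equivalent to M and, with the standard maps, is a Lambda-semibranching function system
  whose Radon-Nikodym derivatives are 2^(-d(l)_1) H(pre l x) / H(x). Multiplication by
  sqrt (H1 / H2) is then a unitary between the two L^2 spaces intertwining the representations.\<close>

section \<open>Coordinates on the infinite path space\<close>

lemma LamE: "l \<in> Lam \<Longrightarrow> (\<And>a b k. l = (a, b, k) \<Longrightarrow> length k = a \<Longrightarrow> P) \<Longrightarrow> P"
  unfolding Lam_def by auto

lemma zero_le_pair [simp]: "(0::nat\<times>nat) \<le> p"
  by (cases p) (simp add: zero_prod_def less_eq_prod_def)

lemma Linf_Lam: "x \<in> Linf \<Longrightarrow> p \<le> q \<Longrightarrow> x p q \<in> Lam \<and> deg (x p q) = q - p"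
  unfolding Linf_def by blast

lemma Linf_path_shape:
  assumes "x \<in> Linf" "p \<le> q"
  shows "x p q = (fst q - fst p, snd q - snd p, snd (snd (x p q)))"
    "length (snd (snd (x p q))) = fst q - fst p"
proof -
  have "x p q \<in> Lam \<and> deg (x p q) = q - p" using assms unfolding Linf_def by blast
  then show "x p q = (fst q - fst p, snd q - snd p, snd (snd (x p q)))"
    "length (snd (snd (x p q))) = fst q - fst p"
    by (auto simp: Lam_def deg_def prod_eq_iff)
qed

lemma Linf_comp: "x \<in> Linf \<Longrightarrow> p \<le> q \<Longrightarrow> q \<le> r \<Longrightarrow> comp (x p q) (x q r) = x p r"
  unfolding Linf_def by blast

lemma Linf_undef: "x \<in> Linf \<Longrightarrow> \<not> p \<le> q \<Longrightarrow> x p q = undefined"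
  unfolding Linf_def by blast

lemma comp_in_Lam: "l \<in> Lam \<Longrightarrow> \<nu> \<in> Lam \<Longrightarrow> comp l \<nu> \<in> Lam"
  by (auto simp: Lam_def comp_def)

lemma snd_snd_comp: "snd (snd (comp (m, n, k) (m', n', k'))) = k @ map (\<lambda>b. b \<noteq> odd n) k'"
  by (simp add: comp_def)

lemma comp_cancel_left: "comp l \<nu> = comp l \<nu>' \<Longrightarrow> \<nu> = \<nu>'"
proof -
  assume eq: "comp l \<nu> = comp l \<nu>'"
  obtain m n k m' n' k' m'' n'' k'' where "l = (m, n, k)" "\<nu> = (m', n', k')" "\<nu>' = (m'', n'', k'')"
    by (cases l, cases \<nu>, cases \<nu>') auto
  moreover have "inj (\<lambda>b. b \<noteq> odd n)" by (rule injI) auto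
  ultimately show ?thesis using eq by (auto simp: comp_def dest: inj_map_eq_map[THEN iffD1, rotated])
qed

lemma Linf_eqI:
  assumes x: "x \<in> Linf" and y: "y \<in> Linf" and eq0: "\<And>q. x 0 q = y 0 q"
  shows "x = y"
proof (intro ext)
  fix p q :: "nat \<times> nat"
  show "x p q = y p q"
  proof (cases "p \<le> q")
    case True
    have "comp (x 0 p) (x p q) = comp (x 0 p) (y p q)"
      using Linf_comp[OF x zero_le_pair True] Linf_comp[OF y zero_le_pair True] eq0 by simp
    then show ?thesis by (rule comp_cancel_left)
  qed (simp add: Linf_undef x y)
qed

definition path_of_seq :: "(nat \<Rightarrow> bool) \<Rightarrow> ipath" where
  "path_of_seq c = (\<lambda>p q. if p \<le> q then (fst q - fst p, snd q - snd p,
      map (\<lambda>j. c j \<noteq> odd (snd p)) [fst p..<fst q]) else undefined)"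

definition seq_of_path :: "ipath \<Rightarrow> nat \<Rightarrow> bool" where
  "seq_of_path x j = snd (snd (x 0 (Suc j, 0))) ! j"

lemma map_flip_parity:
  "p2 \<le> (q2::nat) \<Longrightarrow>
    map (\<lambda>b. b \<noteq> odd (q2 - p2)) (map (\<lambda>j. c j \<noteq> odd q2) xs) = map (\<lambda>j. c j \<noteq> odd p2) xs"
  by (induct xs) (auto simp: even_diff_iff)

lemma comp_path_of_seq:
  assumes "p \<le> q" "q \<le> r"
  shows "comp (path_of_seq c p q) (path_of_seq c q r) = path_of_seq c p r"
proof -
  obtain p1 p2 q1 q2 r1 r2 where pqr: "p = (p1, p2)" "q = (q1, q2)" "r = (r1, r2)"
    by (cases p, cases q, cases r) auto
  have le: "p1 \<le> q1" "p2 \<le> q2" "q1 \<le> r1" "q2 \<le> r2"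
    using assms pqr by (auto simp: less_eq_prod_def)
  have upt: "[p1..<q1] @ [q1..<r1] = [p1..<r1]"
    using le by (metis upt_add_eq_append le_add_diff_inverse)
  have "comp (path_of_seq c p q) (path_of_seq c q r) =
      (q1 - p1 + (r1 - q1), q2 - p2 + (r2 - q2), map (\<lambda>j. c j \<noteq> odd p2) [p1..<q1]
        @ map (\<lambda>b. b \<noteq> odd (q2 - p2)) (map (\<lambda>j. c j \<noteq> odd q2) [q1..<r1]))"
    using assms by (simp add: path_of_seq_def pqr comp_def)
  also have "\<dots> = (r1 - p1, r2 - p2, map (\<lambda>j. c j \<noteq> odd p2) [p1..<r1])"
    using le by (simp only: map_flip_parity[OF le(2)] map_append[symmetric] upt) simp
  also have "\<dots> = path_of_seq c p r"
    using order_trans[OF assms] by (simp add: path_of_seq_def pqr)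
  finally show ?thesis .
qed

lemma path_of_seq_in_Linf: "path_of_seq c \<in> Linf"
  unfolding Linf_def
  by (auto simp: comp_path_of_seq) (auto simp: path_of_seq_def Lam_def deg_def prod_eq_iff)

lemma path_of_seq_0: "path_of_seq c 0 (a, b) = (a, b, map c [0..<a])"
  by (simp add: path_of_seq_def zero_prod_def less_eq_prod_def)

lemma seq_of_path_word_horizontal:
  assumes x: "x \<in> Linf"
  shows "snd (snd (x 0 (a, 0))) = map (seq_of_path x) [0..<a]"
proof (induct a)
  case 0
  show ?case using Linf_path_shape(2)[OF x zero_le_pair, of "(0, 0)"] by simp
next
  case (Suc a)
  have le: "(a, 0::nat) \<le> (Suc a, 0)" by (simp add: less_eq_prod_def)
  obtain w where w: "snd (snd (x (a, 0) (Suc a, 0))) = [w]"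
    using Linf_path_shape(2)[OF x le] by (cases "snd (snd (x (a, 0) (Suc a, 0)))") auto
  have "snd (snd (x 0 (Suc a, 0))) = snd (snd (x 0 (a, 0))) @ [w]"
    unfolding Linf_comp[OF x zero_le_pair le, symmetric]
    by (subst Linf_path_shape(1)[OF x zero_le_pair], subst Linf_path_shape(1)[OF x le])
      (simp add: snd_snd_comp w)
  moreover have "seq_of_path x a = w"
    unfolding seq_of_path_def calculation Suc by (simp add: nth_append)
  ultimately show ?case using Suc by simp
qed

lemma seq_of_path_word:
  assumes x: "x \<in> Linf"
  shows "snd (snd (x 0 (a, b))) = map (seq_of_path x) [0..<a]"
proof -
  have le: "(a, 0::nat) \<le> (a, b)" by (simp add: less_eq_prod_def)
  have "snd (snd (x (a, 0) (a, b))) = []" using Linf_path_shape(2)[OF x le] by simp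
  then show ?thesis
    unfolding Linf_comp[OF x zero_le_pair le, symmetric]
    by (subst Linf_path_shape(1)[OF x zero_le_pair], subst Linf_path_shape(1)[OF x le])
      (simp add: snd_snd_comp seq_of_path_word_horizontal[OF x])
qed

lemma path_of_seq_of_path:
  assumes x: "x \<in> Linf"
  shows "path_of_seq (seq_of_path x) = x"
proof (rule Linf_eqI[OF path_of_seq_in_Linf x])
  fix q :: "nat \<times> nat"
  show "path_of_seq (seq_of_path x) 0 q = x 0 q"
    using Linf_path_shape(1)[OF x zero_le_pair, of q] seq_of_path_word[OF x, of "fst q" "snd q"]
    by (cases q) (simp add: path_of_seq_0)
qed

lemma seq_of_path_of_seq: "seq_of_path (path_of_seq c) = c"
  by (rule ext) (simp add: seq_of_path_def path_of_seq_0 nth_append)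

lemma path_of_seq_inject: "path_of_seq c = path_of_seq c' \<Longrightarrow> c = c'"
  by (metis seq_of_path_of_seq)

definition shift_seq :: "nat \<times> nat \<Rightarrow> (nat \<Rightarrow> bool) \<Rightarrow> nat \<Rightarrow> bool" where
  "shift_seq m c j = (c (j + fst m) \<noteq> odd (snd m))"

definition prefix_seq :: "path \<Rightarrow> (nat \<Rightarrow> bool) \<Rightarrow> nat \<Rightarrow> bool" where
  "prefix_seq l c j = (if j < fst l then snd (snd l) ! j else (c (j - fst l) \<noteq> odd (fst (snd l))))"

lemma code_std_path_of_seq: "code_std m (path_of_seq c) = path_of_seq (shift_seq m c)"
proof (intro ext)
  fix p q :: "nat \<times> nat"
  obtain p1 p2 q1 q2 m1 m2 where pq: "p = (p1,p2)" "q = (q1,q2)" "m = (m1,m2)" by (cases p, cases q, cases m) auto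
  have e: "map (\<lambda>j. c j \<noteq> odd (p2 + m2)) [p1 + m1..<q1 + m1]
     = map (\<lambda>j. (c (j + m1) \<noteq> odd m2) \<noteq> odd p2) [p1..<q1]"
  proof -
    have u: "[p1 + m1..<q1 + m1] = map (\<lambda>j. j + m1) [p1..<q1]" by (rule nth_equalityI) auto
    have x: "(c (j + m1) \<noteq> odd (p2 + m2)) = ((c (j + m1) \<noteq> odd m2) \<noteq> odd p2)" for j
      by (cases "even p2"; cases "even m2") auto
    show ?thesis unfolding u map_map o_def using x by simp
  qed
  show "code_std m (path_of_seq c) p q = path_of_seq (shift_seq m c) p q"
    unfolding code_std_def path_of_seq_def shift_seq_def pq using e by (simp add: less_eq_prod_def)
qed

lemma code_std_Linf: "x \<in> Linf \<Longrightarrow> code_std m x = path_of_seq (shift_seq m (seq_of_path x))"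
  using code_std_path_of_seq path_of_seq_of_path by metis

lemma shift_prefix_seq: "l = (a, b, k) \<Longrightarrow> shift_seq (a, b) (prefix_seq l c) = c"
  by (rule ext) (auto simp: shift_seq_def prefix_seq_def)

lemma pre_std_path_of_seq:
  assumes l: "l \<in> Lam"
  shows "pre_std l (path_of_seq c) = path_of_seq (prefix_seq l c)"
proof -
  obtain a b k where lk: "l = (a, b, k)" "length k = a" using l by (rule LamE)
  have dl: "deg l = (a, b)" by (simp add: deg_def lk)
  have pm: "map (prefix_seq l c) [0..<a] = k"
    by (rule nth_equalityI) (auto simp: lk prefix_seq_def)
  show ?thesis unfolding pre_std_def dl
  proof (rule the_equality)
    show "path_of_seq (prefix_seq l c) \<in> Linf \<and> path_of_seq (prefix_seq l c) 0 (a, b) = l \<and> code_std (a, b) (path_of_seq (prefix_seq l c)) = path_of_seq c"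
      using path_of_seq_in_Linf pm by (simp add: path_of_seq_0 lk code_std_path_of_seq shift_prefix_seq[OF refl])
  next
    fix y assume y: "y \<in> Linf \<and> y 0 (a, b) = l \<and> code_std (a, b) y = path_of_seq c"
    then have y1: "y \<in> Linf" by blast
    have m: "map (seq_of_path y) [0..<a] = k" using y seq_of_path_word[OF y1, of a b] by (simp add: lk)
    have sh: "shift_seq (a,b) (seq_of_path y) = c" using y code_std_Linf[OF y1, of "(a,b)"] by (metis path_of_seq_inject)
    have "seq_of_path y = prefix_seq l c"
    proof (rule ext)
      fix j show "seq_of_path y j = prefix_seq l c j"
      proof (cases "j < a")
        case True then show ?thesis using m lk by (auto simp: prefix_seq_def dest: arg_cong[where f="\<lambda>xs. xs ! j"])
      next
        case False
        have "c (j - a) = (seq_of_path y j \<noteq> odd b)" using False unfolding sh[symmetric] shift_seq_def by simp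
        then show ?thesis using False lk by (auto simp: prefix_seq_def)
      qed
    qed
    then show "y = path_of_seq (prefix_seq l c)" using path_of_seq_of_path[OF y1] by simp
  qed
qed

lemma pre_std_Linf: "l \<in> Lam \<Longrightarrow> x \<in> Linf \<Longrightarrow> pre_std l x = path_of_seq (prefix_seq l (seq_of_path x))"
  using pre_std_path_of_seq path_of_seq_of_path by metis

lemma prefix_seq_comp:
  assumes "l \<in> Lam" "\<nu> \<in> Lam"
  shows "prefix_seq l (prefix_seq \<nu> c) = prefix_seq (comp l \<nu>) c"
proof -
  obtain a b k where lk: "l = (a, b, k)" "length k = a" using assms(1) by (rule LamE)
  obtain a' b' k' where nk: "\<nu> = (a', b', k')" "length k' = a'" using assms(2) by (rule LamE)
  show ?thesis
    by (rule ext) (auto simp: prefix_seq_def lk nk comp_def nth_append)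
qed

definition cyl :: "bool list \<Rightarrow> ipath set" where
  "cyl k = {x \<in> Linf. \<forall>j<length k. seq_of_path x j = k ! j}"

lemma cyl_Nil: "cyl [] = Linf" by (simp add: cyl_def)

lemma cyl_subset_Linf: "cyl k \<subseteq> Linf"
  by (auto simp: cyl_def)

lemma Zc_eq_cyl: "l = (a, b, k) \<Longrightarrow> length k = a \<Longrightarrow> Zc l = cyl k"
proof -
  assume lk: "l = (a, b, k)" "length k = a"
  have "x 0 (a, b) = (a, b, k) \<longleftrightarrow> (\<forall>j<length k. seq_of_path x j = k ! j)" if x: "x \<in> Linf" for x
  proof -
    have "x 0 (a, b) = (a, b, map (seq_of_path x) [0..<a])"
      using Linf_path_shape(1)[OF x zero_le_pair, of "(a,b)"] seq_of_path_word[OF x, of a b] by simp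
    then show ?thesis using lk(2) by (auto simp: list_eq_iff_nth_eq)
  qed
  then show ?thesis unfolding Zc_def cyl_def lk deg_def by auto
qed

lemma path_of_seq_in_cyl: "path_of_seq c \<in> cyl k \<longleftrightarrow> (\<forall>j<length k. c j = k ! j)"
  unfolding cyl_def using path_of_seq_in_Linf seq_of_path_of_seq by auto

lemma std_path_eq: "std_path g n = (n, n, map (\<lambda>j. g (Suc j) = odd j) [0..<n])"
  by (induct n) (auto simp: vtx_def comp_def ee_def blue_def f1_def f2_def)

lemma pre_std_in_Linf: "l \<in> Lam \<Longrightarrow> x \<in> Linf \<Longrightarrow> pre_std l x \<in> Linf"
  using pre_std_Linf path_of_seq_in_Linf by metis

lemma code_std_in_Linf: "y \<in> Linf \<Longrightarrow> code_std m y \<in> Linf"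
  using code_std_Linf path_of_seq_in_Linf by metis

lemma code_std_add: "code_std m (code_std n x) = code_std (m + n) x"
  by (rule ext)+ (simp add: code_std_def add.assoc less_eq_prod_def)

lemma code_pre_std: "l \<in> Lam \<Longrightarrow> y \<in> Linf \<Longrightarrow> code_std (deg l) (pre_std l y) = y"
proof -
  assume l: "l \<in> Lam" and y: "y \<in> Linf"
  obtain a b k where lk: "l = (a, b, k)" "length k = a" using l by (rule LamE)
  have "code_std (deg l) (pre_std l y) = path_of_seq (shift_seq (a,b) (prefix_seq l (seq_of_path y)))"
    by (simp only: pre_std_Linf[OF l y] code_std_path_of_seq) (simp add: deg_def lk)
  also have "\<dots> = path_of_seq (seq_of_path y)" by (simp add: shift_prefix_seq[OF lk(1)])
  also have "\<dots> = y" by (rule path_of_seq_of_path[OF y])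
  finally show ?thesis .
qed

lemma pre_std_code:
  assumes lk: "l = (a, b, k)" "length k = a" and x: "x \<in> cyl k"
  shows "pre_std l (code_std (deg l) x) = x"
proof -
  have l: "l \<in> Lam" using lk by (simp add: Lam_def)
  have xL: "x \<in> Linf" using x cyl_subset_Linf by auto
  have "prefix_seq l (shift_seq (a, b) (seq_of_path x)) = seq_of_path x"
  proof (rule ext)
    fix j show "prefix_seq l (shift_seq (a, b) (seq_of_path x)) j = seq_of_path x j"
    proof (cases "j < a")
      case True then show ?thesis using x lk by (simp add: prefix_seq_def cyl_def)
    next
      case False then show ?thesis using lk by (cases "even b") (simp_all add: prefix_seq_def shift_seq_def)
    qed
  qed
  then show ?thesis
    using xL by (simp add: code_std_Linf deg_def lk pre_std_path_of_seq[OF l, unfolded lk] path_of_seq_of_path)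
qed

lemma Zc_subset_Linf: "y \<in> Zc l \<Longrightarrow> y \<in> Linf"
  by (simp add: Zc_def)

lemma pre_std_code_Zc: "l \<in> Lam \<Longrightarrow> y \<in> Zc l \<Longrightarrow> pre_std l (code_std (deg l) y) = y"
proof -
  assume l: "l \<in> Lam" and y: "y \<in> Zc l"
  obtain a b k where lk: "l = (a, b, k)" "length k = a" using l by (rule LamE)
  show ?thesis using pre_std_code[OF lk] y Zc_eq_cyl[OF lk] by simp
qed

lemma pre_std_image:
  assumes lk: "l = (a, b, k)" "length k = a" and A: "A \<subseteq> Linf"
  shows "pre_std l ` A = cyl k \<inter> code_std (a, b) -` A"
proof -
  have l: "l \<in> Lam" using lk by (simp add: Lam_def)
  have dl: "deg l = (a, b)" by (simp add: deg_def lk)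
  show ?thesis
  proof (intro subset_antisym subsetI)
    fix x assume "x \<in> pre_std l ` A"
    then obtain y where y: "y \<in> A" "x = pre_std l y" by auto
    have yL: "y \<in> Linf" using y A by auto
    have "x \<in> cyl k"
      using y(2) pre_std_path_of_seq[OF l, of "seq_of_path y"] path_of_seq_of_path[OF yL] path_of_seq_in_cyl[of "prefix_seq l (seq_of_path y)" k]
      by (simp add: prefix_seq_def lk)
    moreover have "code_std (a, b) x \<in> A" using code_pre_std[OF l yL] y dl by simp
    ultimately show "x \<in> cyl k \<inter> code_std (a, b) -` A" by simp
  next
    fix x assume x: "x \<in> cyl k \<inter> code_std (a, b) -` A"
    then have "x = pre_std l (code_std (a, b) x)" using pre_std_code[OF lk] dl by simp
    then show "x \<in> pre_std l ` A" using x by blast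
  qed
qed

lemma pre_std_range: "l \<in> Lam \<Longrightarrow> pre_std l ` Linf = Zc l"
proof -
  assume l: "l \<in> Lam"
  obtain a b k where lk: "l = (a, b, k)" "length k = a" using l by (rule LamE)
  have "cyl k \<inter> code_std (a, b) -` Linf = cyl k" using cyl_subset_Linf code_std_in_Linf by blast
  then show ?thesis using pre_std_image[OF lk order_refl] Zc_eq_cyl[OF lk] by simp
qed

lemma pre_std_comp: "l \<in> Lam \<Longrightarrow> \<nu> \<in> Lam \<Longrightarrow> x \<in> Linf \<Longrightarrow> pre_std l (pre_std \<nu> x) = pre_std (comp l \<nu>) x"
  by (simp add: pre_std_Linf[of \<nu> x] pre_std_Linf[of "comp l \<nu>" x] pre_std_path_of_seq prefix_seq_comp comp_in_Lam)

lemma pre_std_vtx: "x \<in> Linf \<Longrightarrow> pre_std vtx x = x"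
proof -
  assume x: "x \<in> Linf"
  have v: "vtx \<in> Lam" by (simp add: vtx_def Lam_def)
  have "prefix_seq vtx (seq_of_path x) = seq_of_path x" by (rule ext) (simp add: prefix_seq_def vtx_def)
  then show ?thesis using pre_std_Linf[OF v x] path_of_seq_of_path[OF x] by simp
qed

lemma D_std_eq_Linf: "D_std = (\<lambda>_. Linf)"
proof -
  have "Zc vtx = cyl []" by (rule Zc_eq_cyl) (simp_all add: vtx_def)
  then show ?thesis by (simp add: D_std_def src_def cyl_Nil fun_eq_iff)
qed

lemma Linf_eq_UN_pre_std_range: "Linf = (\<Union>l\<in>Lam_deg m. pre_std l ` Linf)"
proof
  show "(\<Union>l\<in>Lam_deg m. pre_std l ` Linf) \<subseteq> Linf"
    using pre_std_in_Linf by (auto simp: Lam_deg_def)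
  show "Linf \<subseteq> (\<Union>l\<in>Lam_deg m. pre_std l ` Linf)"
  proof
    fix x assume x: "x \<in> Linf"
    have l: "x 0 m \<in> Lam_deg m"
      using Linf_Lam[OF x zero_le_pair] by (simp add: Lam_deg_def prod_eq_iff)
    then have "x \<in> pre_std (x 0 m) ` Linf"
      using x pre_std_range[of "x 0 m"] by (simp add: Zc_def Lam_deg_def)
    with l show "x \<in> (\<Union>l\<in>Lam_deg m. pre_std l ` Linf)" by blast
  qed
qed

lemma pre_std_range_disjoint:
  assumes "l \<in> Lam_deg m" "l' \<in> Lam_deg m" "l \<noteq> l'"
  shows "pre_std l ` Linf \<inter> pre_std l' ` Linf = {}"
  using assms pre_std_range[of l] pre_std_range[of l'] by (auto simp: Lam_deg_def Zc_def)

lemma all_less_split: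
  fixes n a :: nat
  shows "(\<forall>j<n. P j) \<longleftrightarrow> (\<forall>j<min n a. P j) \<and> (\<forall>i<n - a. P (i + a))"
proof
  assume h: "(\<forall>j<min n a. P j) \<and> (\<forall>i<n - a. P (i + a))"
  show "\<forall>j<n. P j"
  proof (intro allI impI)
    fix j assume "j < n"
    then show "P j" using h by (cases "j < a") (auto dest: spec[of _ "j - a"])
  qed
qed auto

lemma vimage_pre_std_cyl:
  assumes lk: "l = (a, b, k)" "length k = a"
  shows "pre_std l -` cyl k' \<inter> Linf =
    (if \<forall>j<min (length k') a. k ! j = k' ! j
     then cyl (map (\<lambda>j. k' ! (j + a) \<noteq> odd b) [0..<length k' - a]) else {})"
proof -
  have l: "l \<in> Lam" using lk by (simp add: Lam_def)
  have "pre_std l x \<in> cyl k' \<longleftrightarrow> (\<forall>j<min (length k') a. k ! j = k' ! j) \<and>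
      (\<forall>i<length k' - a. seq_of_path x i = (k' ! (i + a) \<noteq> odd b))" if x: "x \<in> Linf" for x
  proof -
    have "pre_std l x \<in> cyl k' \<longleftrightarrow> (\<forall>j<length k'. prefix_seq l (seq_of_path x) j = k' ! j)"
      by (simp add: pre_std_Linf[OF l x] path_of_seq_in_cyl)
    also have "\<dots> \<longleftrightarrow> (\<forall>j<min (length k') a. prefix_seq l (seq_of_path x) j = k' ! j) \<and>
        (\<forall>i<length k' - a. prefix_seq l (seq_of_path x) (i + a) = k' ! (i + a))"
      by (rule all_less_split)
    finally show ?thesis by (auto simp: prefix_seq_def lk)
  qed
  then show ?thesis by (auto simp: cyl_def)
qed

abbreviation seq_space :: "(nat \<Rightarrow> bool) measure" where
  "seq_space \<equiv> PiM UNIV (\<lambda>_. count_space UNIV)"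

lemma Zc_Lam_subset: "Zc ` Lam \<subseteq> Pow Linf"
  by (auto simp: Zc_def)

lemma space_Linf_M [simp]: "space Linf_M = Linf"
  unfolding Linf_M_def using Zc_Lam_subset by simp

lemma sets_Linf_M: "sets Linf_M = sigma_sets Linf (Zc ` Lam)"
  unfolding Linf_M_def using Zc_Lam_subset by simp

lemma Zc_Lam_eq_range_cyl: "Zc ` Lam = range cyl"
proof (intro subset_antisym subsetI)
  fix A assume "A \<in> Zc ` Lam"
  then obtain l where l: "l \<in> Lam" "A = Zc l" by auto
  obtain a b k where "l = (a, b, k)" "length k = a" using l(1) by (rule LamE)
  then show "A \<in> range cyl" using l Zc_eq_cyl by auto
next
  fix A assume "A \<in> range cyl"
  then obtain k where "A = cyl k" by auto
  moreover have "(length k, 0, k) \<in> Lam" by (simp add: Lam_def)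
  ultimately show "A \<in> Zc ` Lam" using Zc_eq_cyl[of "(length k, 0, k)"] by (metis image_eqI)
qed

lemma sets_Linf_M_cyl: "sets Linf_M = sigma_sets Linf (range cyl)"
  using sets_Linf_M Zc_Lam_eq_range_cyl by simp

lemma sets_cyl [measurable]: "cyl k \<in> sets Linf_M"
  unfolding sets_Linf_M_cyl by auto

lemma Linf_sets [measurable]: "Linf \<in> sets Linf_M"
  using sets.top[of Linf_M] by simp

lemma seq_of_path_coord_sets: "{x \<in> Linf. seq_of_path x j = v} \<in> sets Linf_M"
proof -
  let ?K = "{k. set k \<subseteq> UNIV \<and> length k = Suc j} \<inter> {k. k ! j = v}"
  have fin: "finite ?K" using finite_lists_length_eq[of "UNIV :: bool set"] by auto
  have "{x \<in> Linf. seq_of_path x j = v} = (\<Union>k\<in>?K. cyl k)"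
  proof (intro subset_antisym subsetI)
    fix x assume x: "x \<in> {x \<in> Linf. seq_of_path x j = v}"
    then have "map (seq_of_path x) [0..<Suc j] \<in> ?K" by (simp del: upt_Suc)
    moreover have "x \<in> cyl (map (seq_of_path x) [0..<Suc j])" using x by (simp add: cyl_def del: upt_Suc)
    ultimately show "x \<in> (\<Union>k\<in>?K. cyl k)" by blast
  next
    fix x assume "x \<in> (\<Union>k\<in>?K. cyl k)"
    then show "x \<in> {x \<in> Linf. seq_of_path x j = v}" by (auto simp: cyl_def)
  qed
  also have "\<dots> \<in> sets Linf_M" using fin by (intro sets.finite_UN) auto
  finally show ?thesis .
qed

lemma measurable_seq_of_path_coord: "(\<lambda>x. seq_of_path x j) \<in> measurable Linf_M (count_space UNIV)"
proof -
  have "(\<lambda>x. seq_of_path x j) -` {v} \<inter> Linf = {x \<in> Linf. seq_of_path x j = v}" for v by auto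
  then show ?thesis using seq_of_path_coord_sets by (simp add: measurable_count_space_eq2)
qed

lemma measurable_seq_of_path [measurable]: "seq_of_path \<in> measurable Linf_M seq_space"
proof -
  have "(\<lambda>x j. seq_of_path x j) \<in> measurable Linf_M seq_space"
    by (rule measurable_PiM_single') (auto simp: measurable_seq_of_path_coord)
  then show ?thesis by simp
qed

lemma measurable_path_of_seq [measurable]: "path_of_seq \<in> measurable seq_space Linf_M"
proof (rule measurable_sigma_sets[OF sets_Linf_M_cyl])
  show "range cyl \<subseteq> Pow Linf" using cyl_subset_Linf by auto
  show "path_of_seq \<in> space seq_space \<rightarrow> Linf" using path_of_seq_in_Linf by auto
  fix A assume "A \<in> range cyl"
  then obtain k where A: "A = cyl k" by auto
  have "path_of_seq -` A \<inter> space seq_space = {c \<in> space seq_space. \<forall>j\<in>{..<length k}. c j = k ! j}" using A path_of_seq_in_cyl by auto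
  also have "\<dots> \<in> sets seq_space" by measurable
  finally show "path_of_seq -` A \<inter> space seq_space \<in> sets seq_space" .
qed

lemma measurable_shift_seq [measurable]: "shift_seq m \<in> measurable seq_space seq_space"
proof -
  have "(\<lambda>c j. shift_seq m c j) \<in> measurable seq_space seq_space"
    by (rule measurable_PiM_single') (auto simp: shift_seq_def)
  then show ?thesis by simp
qed

lemma measurable_prefix_seq [measurable]: "prefix_seq l \<in> measurable seq_space seq_space"
proof -
  have "(\<lambda>c j. prefix_seq l c j) \<in> measurable seq_space seq_space"
    by (rule measurable_PiM_single') (auto simp: prefix_seq_def)
  then show ?thesis by simp
qed

lemma measurable_code_std [measurable]: "code_std m \<in> measurable Linf_M Linf_M"
proof -
  have "(\<lambda>x. path_of_seq (shift_seq m (seq_of_path x))) \<in> measurable Linf_M Linf_M" by measurable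
  then show ?thesis by (rule measurable_cong[THEN iffD1, rotated]) (simp add: code_std_Linf)
qed

lemma measurable_pre_std [measurable]: "l \<in> Lam \<Longrightarrow> pre_std l \<in> measurable Linf_M Linf_M"
proof -
  assume l: "l \<in> Lam"
  have "(\<lambda>x. path_of_seq (prefix_seq l (seq_of_path x))) \<in> measurable Linf_M Linf_M" by measurable
  then show ?thesis by (rule measurable_cong[THEN iffD1, rotated]) (simp add: pre_std_Linf l)
qed

lemma pre_std_image_sets:
  assumes l: "l \<in> Lam" and A: "A \<in> sets Linf_M"
  shows "pre_std l ` A \<in> sets Linf_M"
proof -
  obtain a b k where lk: "l = (a, b, k)" "length k = a" using l by (rule LamE)
  have AL: "A \<subseteq> Linf" using sets.sets_into_space[OF A] by simp
  have "cyl k \<inter> code_std (a, b) -` A = cyl k \<inter> (code_std (a, b) -` A \<inter> space Linf_M)"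
    using cyl_subset_Linf by auto
  also have "\<dots> \<in> sets Linf_M" by (rule sets.Int[OF sets_cyl measurable_sets[OF measurable_code_std A]])
  finally show ?thesis using pre_std_image[OF lk AL] by simp
qed

abbreviation coin :: "bool measure" where "coin \<equiv> measure_pmf (bernoulli_pmf (1/2))"

abbreviation coin_space :: "(nat \<Rightarrow> bool) measure" where "coin_space \<equiv> PiM UNIV (\<lambda>_. coin)"

definition uniform_measure :: "ipath measure" where "uniform_measure = distr coin_space Linf_M path_of_seq"

lemma sets_coin_space: "sets coin_space = sets seq_space"
  by (rule sets_PiM_cong) (auto simp: sets_measure_pmf_count_space)

lemma measurable_path_of_seq_coin: "path_of_seq \<in> measurable coin_space Linf_M"
  using measurable_path_of_seq measurable_cong_sets[OF sets_coin_space refl] by blast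

lemma sets_uniform [simp]: "sets uniform_measure = sets Linf_M" and space_uniform [simp]: "space uniform_measure = Linf"
  by (simp_all add: uniform_measure_def)

lemma measurable_uniform [simp]: "measurable uniform_measure N = measurable Linf_M N"
  by (rule measurable_cong_sets) auto

lemma emeasure_coin: "emeasure coin {b} = ennreal (1/2)"
  by (cases b) (simp_all add: emeasure_pmf_single)

lemma emeasure_uniform_cyl: "emeasure uniform_measure (cyl k) = ennreal ((1/2) ^ length k)"
proof -
  let ?n = "length k"
  have "path_of_seq -` cyl k \<inter> space coin_space = prod_emb UNIV (\<lambda>_. coin) {..<?n} (Pi\<^sub>E {..<?n} (\<lambda>j. {k ! j}))"
    by (auto simp: prod_emb_def path_of_seq_in_cyl PiE_iff space_PiM)
  then have "emeasure uniform_measure (cyl k) = emeasure coin_space (prod_emb UNIV (\<lambda>_. coin) {..<?n} (Pi\<^sub>E {..<?n} (\<lambda>j. {k ! j})))"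
    unfolding uniform_measure_def by (simp add: emeasure_distr measurable_path_of_seq_coin)
  also have "\<dots> = (\<Prod>j<?n. emeasure coin {k ! j})"
    by (rule emeasure_PiM_emb) (auto simp: prob_space_measure_pmf)
  also have "\<dots> = ennreal (1/2) ^ ?n" by (simp only: emeasure_coin prod_constant card_lessThan)
  also have "\<dots> = ennreal ((1/2) ^ ?n)" by (rule ennreal_power) simp
  finally show ?thesis .
qed

lemma prob_space_uniform: "prob_space uniform_measure"
  by (rule prob_spaceI) (metis emeasure_uniform_cyl cyl_Nil space_uniform list.size(3) power_0 ennreal_1)

lemma emeasure_uniform_finite: "emeasure uniform_measure A \<noteq> top"
proof -
  interpret prob_space uniform_measure by (rule prob_space_uniform)
  have "emeasure uniform_measure A \<le> emeasure uniform_measure (space uniform_measure)" by (rule emeasure_space)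
  then show ?thesis using emeasure_space_1 by (auto simp: top_unique)
qed

lemma cyl_Int_cyl_le:
  assumes "length k \<le> length k'"
  shows "cyl k \<inter> cyl k' = (if (\<forall>j<length k. k ! j = k' ! j) then cyl k' else {})"
  using assms by (auto simp: cyl_def)

lemma cyl_Int_cyl: "cyl k \<inter> cyl k' \<in> insert {} (range cyl)"
proof (cases "length k \<le> length k'")
  case True then show ?thesis using cyl_Int_cyl_le[OF True] by auto
next
  case False
  then have "length k' \<le> length k" by simp
  then show ?thesis using cyl_Int_cyl_le[of k' k] by (auto simp: Int_commute)
qed

lemma sets_Linf_M_cyl_empty: "sets Linf_M = sigma_sets Linf (insert {} (range cyl))"
proof -
  have "sigma_sets Linf (insert {} (range cyl)) = sigma_sets Linf (range cyl)"
  proof (rule sigma_sets_eqI)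
    fix a assume "a \<in> insert {} (range cyl)"
    then show "a \<in> sigma_sets Linf (range cyl)" by (auto intro: sigma_sets.Empty)
  next
    fix b assume "b \<in> range cyl" then show "b \<in> sigma_sets Linf (insert {} (range cyl))" by auto
  qed
  then show ?thesis using sets_Linf_M_cyl by simp
qed

lemma Linf_measure_eqI:
  assumes "sets N1 = sets Linf_M" "sets N2 = sets Linf_M"
    and "\<And>k. emeasure N1 (cyl k) = emeasure N2 (cyl k)" and "emeasure N1 Linf \<noteq> \<infinity>"
  shows "N1 = N2"
proof (rule measure_eqI_generator_eq[where E="insert {} (range cyl)" and \<Omega> = Linf and A="\<lambda>_. Linf"])
  show "Int_stable (insert {} (range cyl))"
    unfolding Int_stable_def using cyl_Int_cyl by auto
  show "insert {} (range cyl) \<subseteq> Pow Linf" using cyl_subset_Linf by auto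
  fix A assume "A \<in> insert {} (range cyl)"
  then show "emeasure N1 A = emeasure N2 A" using assms(3) by auto
qed (use assms sets_Linf_M_cyl_empty cyl_Nil in auto)

section \<open>Change of variables along prefixing maps\<close>

lemma emeasure_vimage_pre_std_cyl:
  assumes lk: "l = (a, b, k)" "length k = a"
  shows "ennreal ((1/2) ^ a) * emeasure uniform_measure (pre_std l -` cyl k' \<inter> Linf) =
    emeasure uniform_measure (cyl k \<inter> cyl k')"
proof (cases "\<forall>j<min (length k') a. k ! j = k' ! j")
  case True
  have "cyl k \<inter> cyl k' = cyl (if length k \<le> length k' then k' else k)"
    using cyl_Int_cyl_le[of k k'] cyl_Int_cyl_le[of k' k] True lk by (auto simp: Int_commute)
  then have "emeasure uniform_measure (cyl k \<inter> cyl k') = ennreal ((1/2) ^ max a (length k'))"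
    using lk by (simp add: emeasure_uniform_cyl max_def)
  moreover have "(1/2::real) ^ a * (1/2) ^ (length k' - a) = (1/2) ^ max a (length k')"
    by (simp add: power_add[symmetric] max_def)
  ultimately show ?thesis
    using True by (simp add: vimage_pre_std_cyl[OF lk] emeasure_uniform_cyl ennreal_mult'[symmetric])
next
  case False
  then have "cyl k \<inter> cyl k' = {}" using lk by (auto simp: cyl_def)
  with False show ?thesis by (simp only: vimage_pre_std_cyl[OF lk] if_False) simp
qed

lemma density_cyl_eq_distr_pre_std:
  assumes lk: "l = (a, b, k)" "length k = a"
  shows "density uniform_measure (indicator (cyl k)) =
    density (distr uniform_measure Linf_M (pre_std l)) (\<lambda>_. ennreal ((1/2) ^ a))"
proof (rule Linf_measure_eqI)
  have l: "l \<in> Lam" using lk by (simp add: Lam_def)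
  show "emeasure (density uniform_measure (indicator (cyl k))) Linf \<noteq> \<infinity>"
    by (subst emeasure_restricted) (simp_all add: emeasure_uniform_finite)
  fix k'
  have "emeasure (density (distr uniform_measure Linf_M (pre_std l)) (\<lambda>_. ennreal ((1/2) ^ a))) (cyl k')
      = ennreal ((1/2) ^ a) * emeasure uniform_measure (pre_std l -` cyl k' \<inter> Linf)"
    by (simp add: emeasure_density_const emeasure_distr measurable_pre_std[OF l])
  also have "\<dots> = emeasure (density uniform_measure (indicator (cyl k))) (cyl k')"
    by (simp add: emeasure_vimage_pre_std_cyl[OF lk] emeasure_restricted)
  finally show "emeasure (density uniform_measure (indicator (cyl k))) (cyl k') =
      emeasure (density (distr uniform_measure Linf_M (pre_std l)) (\<lambda>_. ennreal ((1/2) ^ a))) (cyl k')" ..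
qed simp_all

lemma nn_integral_cyl_pre_std:
  assumes lk: "l = (a, b, k)" "length k = a" and f: "f \<in> borel_measurable Linf_M"
  shows "(\<integral>\<^sup>+ x. indicator (cyl k) x * f x \<partial>uniform_measure) = ennreal ((1/2) ^ a) * (\<integral>\<^sup>+ x. f (pre_std l x) \<partial>uniform_measure)"
proof -
  have l: "l \<in> Lam" using lk by (simp add: Lam_def)
  have "(\<integral>\<^sup>+ x. indicator (cyl k) x * f x \<partial>uniform_measure) = integral\<^sup>N (density uniform_measure (indicator (cyl k))) f"
    using nn_integral_density[of "indicator (cyl k)" uniform_measure f] f by simp
  also have "\<dots> = integral\<^sup>N (density (distr uniform_measure Linf_M (pre_std l)) (\<lambda>_. ennreal ((1/2) ^ a))) f"
    by (simp add: density_cyl_eq_distr_pre_std[OF lk])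
  also have "\<dots> = (\<integral>\<^sup>+ x. ennreal ((1/2) ^ a) * f x \<partial>distr uniform_measure Linf_M (pre_std l))"
    using f by (simp add: nn_integral_density)
  also have "\<dots> = ennreal ((1/2) ^ a) * integral\<^sup>N (distr uniform_measure Linf_M (pre_std l)) f"
    using f by (simp add: nn_integral_cmult)
  also have "\<dots> = ennreal ((1/2) ^ a) * (\<integral>\<^sup>+ x. f (pre_std l x) \<partial>uniform_measure)"
    using f by (simp add: nn_integral_distr measurable_pre_std[OF l])
  finally show ?thesis .
qed

lemma nn_integral_pre_std_image:
  assumes l: "l \<in> Lam" and A: "A \<in> sets Linf_M" and H: "H \<in> borel_measurable Linf_M"
  shows "(\<integral>\<^sup>+ x. H x * indicator (pre_std l ` A) x \<partial>uniform_measure) =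
       ennreal ((1/2) ^ fst l) * (\<integral>\<^sup>+ x. H (pre_std l x) * indicator A x \<partial>uniform_measure)"
proof -
  obtain a b k where lk: "l = (a, b, k)" "length k = a" using l by (rule LamE)
  have AL: "A \<subseteq> Linf" using sets.sets_into_space[OF A] by simp
  have dl: "deg l = (a, b)" by (simp add: deg_def lk)
  have "(\<integral>\<^sup>+ x. H x * indicator (pre_std l ` A) x \<partial>uniform_measure)
     = (\<integral>\<^sup>+ x. indicator (cyl k) x * (H x * indicator A (code_std (a, b) x)) \<partial>uniform_measure)"
    by (rule nn_integral_cong) (simp add: pre_std_image[OF lk AL] indicator_def)
  also have "\<dots> = ennreal ((1/2) ^ a) * (\<integral>\<^sup>+ x. H (pre_std l x) * indicator A (code_std (a, b) (pre_std l x)) \<partial>uniform_measure)"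
    by (rule nn_integral_cyl_pre_std[OF lk]) (use H A in measurable)
  also have "(\<integral>\<^sup>+ x. H (pre_std l x) * indicator A (code_std (a, b) (pre_std l x)) \<partial>uniform_measure)
      = (\<integral>\<^sup>+ x. H (pre_std l x) * indicator A x \<partial>uniform_measure)"
    by (rule nn_integral_cong) (simp add: code_pre_std[OF l, unfolded dl] pre_std_in_Linf[OF l])
  finally show ?thesis using lk by simp
qed

lemma pre_std_image_null:
  assumes l: "l \<in> Lam" and N: "N \<in> null_sets uniform_measure"
  shows "pre_std l ` N \<in> null_sets uniform_measure"
proof -
  have Ns: "N \<in> sets Linf_M" using N by (simp add: null_sets_def)
  have s: "pre_std l ` N \<in> sets Linf_M" by (rule pre_std_image_sets[OF l Ns])
  have "emeasure uniform_measure (pre_std l ` N) = (\<integral>\<^sup>+ x. (\<lambda>_. 1) x * indicator (pre_std l ` N) x \<partial>uniform_measure)"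
    using s by simp
  also have "\<dots> = ennreal ((1/2) ^ fst l) * (\<integral>\<^sup>+ x. (\<lambda>_. 1) (pre_std l x) * indicator N x \<partial>uniform_measure)"
    by (rule nn_integral_pre_std_image[OF l Ns]) simp
  also have "\<dots> = ennreal ((1/2) ^ fst l) * emeasure uniform_measure N" using Ns by simp
  also have "\<dots> = 0" using N by (simp add: null_setsD1)
  finally show ?thesis using s by (simp add: null_sets_def)
qed

lemma AE_code_std:
  assumes l: "l \<in> Lam" and P: "AE x in uniform_measure. P x"
  shows "AE y in uniform_measure. y \<in> Zc l \<longrightarrow> P (code_std (deg l) y)"
proof -
  obtain N where N: "{x \<in> space uniform_measure. \<not> P x} \<subseteq> N" "N \<in> null_sets uniform_measure" using P by (auto simp: eventually_ae_filter)
  show ?thesis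
  proof (rule AE_I'[OF pre_std_image_null[OF l N(2)]])
    show "{y \<in> space uniform_measure. \<not> (y \<in> Zc l \<longrightarrow> P (code_std (deg l) y))} \<subseteq> pre_std l ` N"
    proof
      fix y assume y: "y \<in> {y \<in> space uniform_measure. \<not> (y \<in> Zc l \<longrightarrow> P (code_std (deg l) y))}"
      then have yz: "y \<in> Zc l" and nP: "\<not> P (code_std (deg l) y)" by auto
      have "code_std (deg l) y \<in> N" using N(1) nP code_std_in_Linf[OF Zc_subset_Linf[OF yz], of "deg l"] by auto
      moreover have "y = pre_std l (code_std (deg l) y)" using pre_std_code_Zc[OF l yz] by simp
      ultimately show "y \<in> pre_std l ` N" by blast
    qed
  qed
qed

section \<open>Measures with a positive density\<close>

lemma restrict_space_space: "restrict_space M (space M) = M"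
proof (rule measure_eqI)
  show "sets (restrict_space M (space M)) = sets M"
    by (auto simp: sets_restrict_space_iff) (meson sets.sets_into_space subsetD)
  fix A assume "A \<in> sets (restrict_space M (space M))"
  then have "A \<subseteq> space M" using sets.sets_into_space by (auto simp: sets_restrict_space_iff)
  then show "emeasure (restrict_space M (space M)) A = emeasure M A"
    by (rule emeasure_restrict_space[rotated]) simp
qed

lemma AE_density_pos_iff:
  assumes "H \<in> borel_measurable M" "\<forall>x\<in>space M. 0 < H x"
  shows "(AE x in density M (\<lambda>x. ennreal (H x)). P x) \<longleftrightarrow> (AE x in M. P x)"
proof -
  have "(AE x in density M (\<lambda>x. ennreal (H x)). P x) \<longleftrightarrow> (AE x in M. 0 < ennreal (H x) \<longrightarrow> P x)"
    using assms(1) by (intro AE_density) simp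
  also have "\<dots> \<longleftrightarrow> (AE x in M. P x)"
    by (rule AE_cong) (use assms(2) in auto)
  finally show ?thesis .
qed

lemma null_sets_density_pos:
  assumes "H \<in> borel_measurable M" "\<forall>x\<in>space M. 0 < H x"
  shows "null_sets (density M (\<lambda>x. ennreal (H x))) = null_sets M"
proof (intro set_eqI)
  fix A
  have "A \<in> null_sets (density M (\<lambda>x. ennreal (H x))) \<longleftrightarrow>
      A \<in> sets M \<and> (AE x in M. x \<in> A \<longrightarrow> ennreal (H x) = 0)"
    using assms(1) by (intro null_sets_density_iff) simp
  also have "(AE x in M. x \<in> A \<longrightarrow> ennreal (H x) = 0) \<longleftrightarrow> (AE x in M. x \<notin> A)"
    by (rule AE_cong) (use assms(2) in auto)
  finally show "A \<in> null_sets (density M (\<lambda>x. ennreal (H x))) \<longleftrightarrow> A \<in> null_sets M"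
    using AE_iff_null_sets by blast
qed

definition positive_weight :: "(ipath \<Rightarrow> real) \<Rightarrow> bool" where
  "positive_weight H \<longleftrightarrow> H \<in> borel_measurable Linf_M \<and> (\<forall>x\<in>Linf. 0 < H x)"

definition uniform_density :: "(ipath \<Rightarrow> real) \<Rightarrow> ipath measure" where
  "uniform_density H = density uniform_measure (\<lambda>x. ennreal (H x))"

lemma positive_weight_pos: "positive_weight H \<Longrightarrow> x \<in> Linf \<Longrightarrow> 0 < H x"
  unfolding positive_weight_def by blast

lemma positive_weight_measurable: "positive_weight H \<Longrightarrow> H \<in> borel_measurable Linf_M"
  unfolding positive_weight_def by blast

lemma sets_uniform_density [simp]: "sets (uniform_density H) = sets Linf_M"
  and space_uniform_density [simp]: "space (uniform_density H) = Linf"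
  by (simp_all add: uniform_density_def)

lemma measurable_uniform_density [simp]: "measurable (uniform_density H) N = measurable Linf_M N"
  by (rule measurable_cong_sets) auto

lemma measurable_into_uniform_density [simp]: "measurable M (uniform_density H) = measurable M Linf_M"
  by (rule measurable_cong_sets) auto

lemma restrict_space_uniform_density [simp]: "restrict_space (uniform_density H) Linf = uniform_density H"
  using restrict_space_space[of "uniform_density H"] by simp

lemma AE_uniform_density:
  "positive_weight H \<Longrightarrow> (AE x in uniform_density H. P x) \<longleftrightarrow> (AE x in uniform_measure. P x)"
  unfolding uniform_density_def positive_weight_def by (rule AE_density_pos_iff) auto

lemma null_sets_uniform_density:
  "positive_weight H \<Longrightarrow> null_sets (uniform_density H) = null_sets uniform_measure"
  unfolding uniform_density_def positive_weight_def by (rule null_sets_density_pos) auto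

lemma emeasure_uniform_density_Linf_pos:
  assumes "positive_weight H"
  shows "0 < emeasure (uniform_density H) Linf"
proof -
  have "Linf \<notin> null_sets uniform_measure"
    using emeasure_uniform_cyl[of "[]"] by (simp add: cyl_Nil null_sets_def)
  then have "Linf \<notin> null_sets (uniform_density H)"
    using null_sets_uniform_density[OF assms] by simp
  then show ?thesis by (metis Linf_sets null_setsI sets_uniform_density not_gr_zero)
qed

lemma sigma_finite_uniform_density:
  assumes "H \<in> borel_measurable Linf_M"
  shows "sigma_finite_measure (uniform_density H)"
proof -
  interpret prob_space uniform_measure by (rule prob_space_uniform)
  show ?thesis
    unfolding uniform_density_def using assms by (subst sigma_finite_iff_density_finite) auto
qed

text \<open>Prefixing by l scales the uniform measure by 2^(-fst l), so pulling back H dM along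
  pre_std l gives the density below.\<close>

definition pre_std_RN :: "(ipath \<Rightarrow> real) \<Rightarrow> path \<Rightarrow> ipath \<Rightarrow> real" where
  "pre_std_RN H l x = (1/2) ^ fst l * H (pre_std l x) / H x"

lemma measurable_pre_std_RN [measurable]:
  assumes [measurable]: "H \<in> borel_measurable Linf_M" and l: "l \<in> Lam"
  shows "pre_std_RN H l \<in> borel_measurable Linf_M"
proof -
  have [measurable]: "pre_std l \<in> measurable Linf_M Linf_M" using measurable_pre_std[OF l] .
  show ?thesis unfolding pre_std_RN_def[abs_def] by measurable
qed

lemma pre_std_RN_pos: "positive_weight H \<Longrightarrow> l \<in> Lam \<Longrightarrow> x \<in> Linf \<Longrightarrow> 0 < pre_std_RN H l x"
  by (simp add: pre_std_RN_def positive_weight_pos pre_std_in_Linf)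

lemma emeasure_uniform_density_pre_std_image:
  assumes H: "positive_weight H" and l: "l \<in> Lam" and A: "A \<in> sets Linf_M"
  shows "emeasure (uniform_density H) (pre_std l ` A) =
    emeasure (density (uniform_density H) (\<lambda>x. ennreal (pre_std_RN H l x))) A"
proof -
  have [measurable]: "H \<in> borel_measurable Linf_M" "pre_std l \<in> measurable Linf_M Linf_M"
    using positive_weight_measurable[OF H] measurable_pre_std[OF l] .
  let ?c = "(1/2::real) ^ fst l"
  have RN: "ennreal ?c * ennreal (H (pre_std l x)) = ennreal (H x) * ennreal (pre_std_RN H l x)"
    if x: "x \<in> Linf" for x
    using positive_weight_pos[OF H x] positive_weight_pos[OF H pre_std_in_Linf[OF l x]]
    by (simp add: ennreal_mult'[symmetric] pre_std_RN_def)
  have "emeasure (uniform_density H) (pre_std l ` A) =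
      (\<integral>\<^sup>+ x. ennreal (H x) * indicator (pre_std l ` A) x \<partial>uniform_measure)"
    unfolding uniform_density_def using pre_std_image_sets[OF l A] by (simp add: emeasure_density)
  also have "\<dots> = ennreal ?c * (\<integral>\<^sup>+ x. ennreal (H (pre_std l x)) * indicator A x \<partial>uniform_measure)"
    by (rule nn_integral_pre_std_image[OF l A]) measurable
  also have "\<dots> = (\<integral>\<^sup>+ x. ennreal (H x) * (ennreal (pre_std_RN H l x) * indicator A x) \<partial>uniform_measure)"
    using A by (subst nn_integral_cmult[symmetric]) (auto intro!: nn_integral_cong simp: RN mult.assoc[symmetric])
  also have "\<dots> = emeasure (density (uniform_density H) (\<lambda>x. ennreal (pre_std_RN H l x))) A"
    using A l unfolding uniform_density_def
    by (simp add: emeasure_density nn_integral_density)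
  finally show ?thesis .
qed

lemma pullback_uniform_density:
  assumes H: "positive_weight H" and l: "l \<in> Lam"
  shows "pullback (uniform_density H) (D_std l) (pre_std l) =
    density (uniform_density H) (\<lambda>x. ennreal (pre_std_RN H l x))"
proof -
  have "pullback (uniform_density H) (D_std l) (pre_std l) =
      measure_of Linf (sets Linf_M) (\<lambda>A. emeasure (uniform_density H) (pre_std l ` A))"
    unfolding pullback_def D_std_eq_Linf by simp
  also have "\<dots> = measure_of Linf (sets Linf_M)
      (emeasure (density (uniform_density H) (\<lambda>x. ennreal (pre_std_RN H l x))))"
    using sets.sigma_sets_eq[of Linf_M] sets.space_closed[of Linf_M]
    by (intro measure_of_eq) (auto simp: emeasure_uniform_density_pre_std_image[OF H l])
  also have "\<dots> = density (uniform_density H) (\<lambda>x. ennreal (pre_std_RN H l x))"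
    using measure_of_of_measure[of "density (uniform_density H) (\<lambda>x. ennreal (pre_std_RN H l x))"]
    by simp
  finally show ?thesis .
qed

lemma Phi_uniform_density:
  assumes H: "positive_weight H" and l: "l \<in> Lam"
  shows "AE x in uniform_density H. Phi (uniform_density H) D_std pre_std l x = ennreal (pre_std_RN H l x)"
proof -
  have [measurable]: "H \<in> borel_measurable Linf_M" using positive_weight_measurable[OF H] .
  interpret sigma_finite_measure "uniform_density H"
    by (rule sigma_finite_uniform_density) measurable
  have "AE x in uniform_density H. ennreal (pre_std_RN H l x) =
      RN_deriv (uniform_density H) (density (uniform_density H) (\<lambda>x. ennreal (pre_std_RN H l x))) x"
    by (rule RN_deriv_unique) (use l in simp_all)
  then show ?thesis
    unfolding Phi_def pullback_uniform_density[OF H l] by (auto simp: D_std_eq_Linf elim: eventually_mono)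
qed

lemma SBFS_uniform_density:
  assumes H: "positive_weight H"
  shows "SBFS (uniform_density H) D_std pre_std code_std"
  unfolding SBFS_def
proof (intro conjI ballI allI impI)
  fix l assume l: "l \<in> Lam"
  have [measurable]: "H \<in> borel_measurable Linf_M" using positive_weight_measurable[OF H] .
  show "absolutely_continuous (restrict_space (uniform_density H) (D_std l))
      (pullback (uniform_density H) (D_std l) (pre_std l))"
    unfolding pullback_uniform_density[OF H l]
    unfolding D_std_eq_Linf restrict_space_uniform_density
    by (rule absolutely_continuousI_density) (simp, use l in measurable)
  show "AE x in restrict_space (uniform_density H) (D_std l). 0 < Phi (uniform_density H) D_std pre_std l x"
    using Phi_uniform_density[OF H l] AE_space unfolding D_std_eq_Linf restrict_space_uniform_density
    by eventually_elim (simp add: pre_std_RN_pos[OF H l] D_std_eq_Linf)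
qed (auto simp: D_std_eq_Linf measurable_pre_std pre_std_image_sets code_pre_std pre_std_vtx
    pre_std_comp pre_std_in_Linf code_std_add pre_std_range_disjoint
    emeasure_uniform_density_Linf_pos[OF H]
    simp flip: Linf_eq_UN_pre_std_range)

section \<open>Unitary equivalence of the representations\<close>

lemma sqrt_ratio_powr_swap:
  fixes a b c d e :: real
  assumes "0 < a" "0 < b" "0 < c" "0 < d" "0 < e"
  shows "sqrt (a / b) * (c * a / d) powr (-1/2) = (c * b / e) powr (-1/2) * sqrt (d / e)"
proof -
  have inv_sqrt: "x powr (-1/2) = inverse (sqrt x)" if "0 \<le> x" for x :: real
    using that powr_minus[of x "1/2"] by (simp add: powr_half_sqrt)
  have sqrt_div: "sqrt x * inverse (sqrt y) = sqrt (x / y)" for x y :: real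
    by (simp add: divide_inverse real_sqrt_mult real_sqrt_inverse)
  have "(a / b) / (c * a / d) = (d / e) / (c * b / e)"
    using assms by (simp add: field_simps)
  then show ?thesis
    using assms by (simp only: inv_sqrt less_imp_le divide_pos_pos mult_pos_pos sqrt_div mult.commute)
qed

text \<open>Multiplication by sqrt (H1 / H2) is unitary from L^2(H1 dM) to L^2(H2 dM); it intertwines
  the representations because the Radon-Nikodym factors of the two systems differ exactly by the
  ratio H1 / H2 at a point and at its image under the coding map.\<close>

definition sqrt_ratio_op ::
    "(ipath \<Rightarrow> real) \<Rightarrow> (ipath \<Rightarrow> real) \<Rightarrow> (ipath \<Rightarrow> complex) \<Rightarrow> ipath \<Rightarrow> complex" where
  "sqrt_ratio_op H1 H2 \<xi> y = complex_of_real (sqrt (H1 y / H2 y)) * \<xi> y"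

lemma L2_uniform_density_iff:
  assumes H: "positive_weight H"
  shows "\<xi> \<in> L2 (uniform_density H) \<longleftrightarrow>
    \<xi> \<in> borel_measurable Linf_M \<and> integrable uniform_measure (\<lambda>x. H x * (cmod (\<xi> x))\<^sup>2)"
proof (cases "\<xi> \<in> borel_measurable Linf_M")
  case True
  have [measurable]: "H \<in> borel_measurable Linf_M" "\<xi> \<in> borel_measurable Linf_M"
    using positive_weight_measurable[OF H] True .
  have "AE x in uniform_measure. 0 \<le> H x"
    using positive_weight_pos[OF H] by (intro AE_I2) (simp add: less_imp_le)
  then have "integrable (uniform_density H) (\<lambda>x. (cmod (\<xi> x))\<^sup>2) \<longleftrightarrow>
      integrable uniform_measure (\<lambda>x. H x *\<^sub>R (cmod (\<xi> x))\<^sup>2)"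
    unfolding uniform_density_def by (intro integrable_density) auto
  then show ?thesis using True by (simp add: L2_def)
qed (simp add: L2_def)

lemma L2_norm_uniform_density:
  assumes H: "positive_weight H" and \<xi>: "\<xi> \<in> borel_measurable Linf_M"
  shows "(\<integral>x. (cmod (\<xi> x))\<^sup>2 \<partial>uniform_density H) = (\<integral>x. H x * (cmod (\<xi> x))\<^sup>2 \<partial>uniform_measure)"
proof -
  have [measurable]: "H \<in> borel_measurable Linf_M" "\<xi> \<in> borel_measurable Linf_M"
    using positive_weight_measurable[OF H] \<xi> .
  have "AE x in uniform_measure. 0 \<le> H x"
    using positive_weight_pos[OF H] by (intro AE_I2) (simp add: less_imp_le)
  then show ?thesis unfolding uniform_density_def by (subst integral_density) auto
qed

lemma sqrt_ratio_op_L2: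
  assumes H1: "positive_weight H1" and H2: "positive_weight H2" and \<xi>: "\<xi> \<in> L2 (uniform_density H1)"
  shows "sqrt_ratio_op H1 H2 \<xi> \<in> L2 (uniform_density H2)"
    and "(\<integral>y. (cmod (sqrt_ratio_op H1 H2 \<xi> y))\<^sup>2 \<partial>uniform_density H2) = (\<integral>x. (cmod (\<xi> x))\<^sup>2 \<partial>uniform_density H1)"
proof -
  have [measurable]: "\<xi> \<in> borel_measurable Linf_M"
    and int: "integrable uniform_measure (\<lambda>x. H1 x * (cmod (\<xi> x))\<^sup>2)"
    using \<xi> L2_uniform_density_iff[OF H1] by auto
  have [measurable]: "H1 \<in> borel_measurable Linf_M" "H2 \<in> borel_measurable Linf_M"
    using positive_weight_measurable[OF H1] positive_weight_measurable[OF H2] .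
  have U[measurable]: "sqrt_ratio_op H1 H2 \<xi> \<in> borel_measurable Linf_M"
    unfolding sqrt_ratio_op_def[abs_def] by measurable
  have eq: "H2 x * (cmod (sqrt_ratio_op H1 H2 \<xi> x))\<^sup>2 = H1 x * (cmod (\<xi> x))\<^sup>2" if x: "x \<in> Linf" for x
    using positive_weight_pos[OF H1 x] positive_weight_pos[OF H2 x]
    by (simp add: sqrt_ratio_op_def norm_mult power_mult_distrib)
  have "integrable uniform_measure (\<lambda>x. H2 x * (cmod (sqrt_ratio_op H1 H2 \<xi> x))\<^sup>2)"
    using int by (subst Bochner_Integration.integrable_cong[OF refl eq]) simp_all
  then show "sqrt_ratio_op H1 H2 \<xi> \<in> L2 (uniform_density H2)"
    using L2_uniform_density_iff[OF H2] U by simp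
  show "(\<integral>y. (cmod (sqrt_ratio_op H1 H2 \<xi> y))\<^sup>2 \<partial>uniform_density H2) = (\<integral>x. (cmod (\<xi> x))\<^sup>2 \<partial>uniform_density H1)"
    unfolding L2_norm_uniform_density[OF H2 U] L2_norm_uniform_density[OF H1 \<open>\<xi> \<in> borel_measurable Linf_M\<close>]
    by (rule Bochner_Integration.integral_cong) (simp_all add: eq)
qed

lemma sqrt_ratio_op_inverse:
  assumes "positive_weight H1" "positive_weight H2" "y \<in> Linf"
  shows "sqrt_ratio_op H1 H2 (sqrt_ratio_op H2 H1 \<eta>) y = \<eta> y"
proof -
  have "sqrt (H1 y / H2 y) * sqrt (H2 y / H1 y) = 1"
    using positive_weight_pos[OF assms(1,3)] positive_weight_pos[OF assms(2,3)]
    by (simp add: real_sqrt_mult[symmetric])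
  then have "complex_of_real (sqrt (H1 y / H2 y)) * complex_of_real (sqrt (H2 y / H1 y)) = 1"
    by (metis of_real_1 of_real_mult)
  then show ?thesis by (simp add: sqrt_ratio_op_def mult.assoc[symmetric])
qed

lemma unitary_L2_sqrt_ratio_op:
  assumes H1: "positive_weight H1" and H2: "positive_weight H2"
  shows "unitary_L2 (uniform_density H1) (uniform_density H2) (sqrt_ratio_op H1 H2)"
  unfolding unitary_L2_def
proof (intro conjI ballI allI impI)
  fix \<xi> \<eta> :: "ipath \<Rightarrow> complex" assume "AE x in uniform_density H1. \<xi> x = \<eta> x"
  then show "AE y in uniform_density H2. sqrt_ratio_op H1 H2 \<xi> y = sqrt_ratio_op H1 H2 \<eta> y"
    unfolding AE_uniform_density[OF H1] AE_uniform_density[OF H2]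
    by eventually_elim (simp add: sqrt_ratio_op_def)
next
  fix \<eta> assume \<eta>: "\<eta> \<in> L2 (uniform_density H2)"
  have "AE y in uniform_density H2. sqrt_ratio_op H1 H2 (sqrt_ratio_op H2 H1 \<eta>) y = \<eta> y"
    using sqrt_ratio_op_inverse[OF H1 H2] by (intro AE_I2) simp
  then show "\<exists>\<xi>\<in>L2 (uniform_density H1). AE y in uniform_density H2. sqrt_ratio_op H1 H2 \<xi> y = \<eta> y"
    using sqrt_ratio_op_L2(1)[OF H2 H1 \<eta>] by blast
next
  fix \<xi> :: "ipath \<Rightarrow> complex" and c :: complex
  show "AE y in uniform_density H2. sqrt_ratio_op H1 H2 (\<lambda>x. c * \<xi> x + \<eta> x) y =
      c * sqrt_ratio_op H1 H2 \<xi> y + sqrt_ratio_op H1 H2 \<eta> y" for \<eta>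
    by (intro AE_I2) (simp add: sqrt_ratio_op_def algebra_simps)
qed (simp_all add: sqrt_ratio_op_L2[OF H1 H2])

lemma sb_op_outside_Zc: "y \<notin> Zc l \<Longrightarrow> l \<in> Lam \<Longrightarrow> sb_op \<mu> D_std pre_std code_std l \<xi> y = 0"
  by (simp add: sb_op_def D_std_eq_Linf pre_std_range)

lemma sb_op_uniform_density:
  assumes H: "positive_weight H" and l: "l \<in> Lam" and y: "y \<in> Zc l"
    and Phi: "Phi (uniform_density H) D_std pre_std l (code_std (deg l) y) =
      ennreal (pre_std_RN H l (code_std (deg l) y))"
  shows "sb_op (uniform_density H) D_std pre_std code_std l \<xi> y =
    complex_of_real (((1/2) ^ fst l * H y / H (code_std (deg l) y)) powr (-1/2)) * \<xi> (code_std (deg l) y)"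
proof -
  let ?s = "code_std (deg l) y"
  have "y \<in> Linf" "?s \<in> Linf" using y Zc_subset_Linf code_std_in_Linf by blast+
  then have "0 \<le> pre_std_RN H l ?s"
    using positive_weight_pos[OF H \<open>y \<in> Linf\<close>] positive_weight_pos[OF H \<open>?s \<in> Linf\<close>]
    by (simp add: pre_std_RN_def pre_std_code_Zc[OF l y])
  then show ?thesis
    using y Phi by (simp add: sb_op_def D_std_eq_Linf pre_std_range[OF l] pre_std_RN_def
        pre_std_code_Zc[OF l y])
qed

lemma sqrt_ratio_op_sb_op:
  assumes H1: "positive_weight H1" and H2: "positive_weight H2" and l: "l \<in> Lam"
  shows "AE y in uniform_measure. sqrt_ratio_op H1 H2 (sb_op (uniform_density H1) D_std pre_std code_std l \<xi>) y
    = sb_op (uniform_density H2) D_std pre_std code_std l (sqrt_ratio_op H1 H2 \<xi>) y"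
proof -
  let ?P = "\<lambda>H x. Phi (uniform_density H) D_std pre_std l x = ennreal (pre_std_RN H l x)"
  have "AE x in uniform_measure. ?P H1 x \<and> ?P H2 x"
    using Phi_uniform_density[OF H1 l] Phi_uniform_density[OF H2 l]
    unfolding AE_uniform_density[OF H1] AE_uniform_density[OF H2] by auto
  then have "AE y in uniform_measure. y \<in> Zc l \<longrightarrow> ?P H1 (code_std (deg l) y) \<and> ?P H2 (code_std (deg l) y)"
    by (rule AE_code_std[OF l])
  then show ?thesis
  proof eventually_elim
    case (elim y)
    show ?case
    proof (cases "y \<in> Zc l")
      case True
      let ?s = "code_std (deg l) y"
      have P: "?P H1 ?s" "?P H2 ?s" using elim True by blast+
      have "y \<in> Linf" "?s \<in> Linf" using True Zc_subset_Linf code_std_in_Linf by blast+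
      then have "sqrt (H1 y / H2 y) * ((1/2) ^ fst l * H1 y / H1 ?s) powr (-1/2) =
          ((1/2) ^ fst l * H2 y / H2 ?s) powr (-1/2) * sqrt (H1 ?s / H2 ?s)"
        using positive_weight_pos[OF H1] positive_weight_pos[OF H2] by (intro sqrt_ratio_powr_swap) auto
      then show ?thesis
        by (simp add: sb_op_uniform_density[OF H1 l True P(1)] sb_op_uniform_density[OF H2 l True P(2)]
            sqrt_ratio_op_def mult.assoc[symmetric] flip: of_real_mult)
    qed (simp add: sb_op_outside_Zc l sqrt_ratio_op_def)
  qed
qed

lemma std_rep_equiv_uniform_density:
  assumes H1: "positive_weight H1" and H2: "positive_weight H2"
  shows "std_rep_equiv (uniform_density H1) (uniform_density H2)"
  unfolding std_rep_equiv_def AE_uniform_density[OF H2]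
  using unitary_L2_sqrt_ratio_op[OF H1 H2] sqrt_ratio_op_sb_op[OF H1 H2] by blast

section \<open>The measure determined by an admissible sequence\<close>

text \<open>In e g_1 e g_2 ... the blue edge g_(j+1) becomes letter j of the normal form after moving
  past j+1 copies of e, so g_(j+1) = f1 iff seq_of_path x j = odd j; thus coin_weight \<gamma> j b
  is alpha_(j+1).\<close>

definition coin_weight :: "(nat \<Rightarrow> real) \<Rightarrow> nat \<Rightarrow> bool \<Rightarrow> real" where
  "coin_weight \<gamma> j b = (if b = odd j then 1/2 + \<gamma> (Suc j) else 1/2 - \<gamma> (Suc j))"

definition cyl_weight :: "(nat \<Rightarrow> real) \<Rightarrow> bool list \<Rightarrow> real" where
  "cyl_weight \<gamma> k = (\<Prod>j<length k. coin_weight \<gamma> j (k ! j))"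

definition partial_weight :: "(nat \<Rightarrow> real) \<Rightarrow> nat \<Rightarrow> ipath \<Rightarrow> real" where
  "partial_weight \<gamma> n x = (\<Prod>j<n. 2 * coin_weight \<gamma> j (seq_of_path x j))"

definition gamma_weight :: "(nat \<Rightarrow> real) \<Rightarrow> ipath \<Rightarrow> real" where
  "gamma_weight \<gamma> x = (\<Prod>j. 2 * coin_weight \<gamma> j (seq_of_path x j))"

lemma coin_weight_pos: "admissible \<gamma> \<Longrightarrow> 0 < coin_weight \<gamma> j b"
  unfolding admissible_def coin_weight_def by (auto dest: spec[of _ "Suc j"])

lemma coin_weight_sum: "coin_weight \<gamma> j True + coin_weight \<gamma> j False = 1"
  by (simp add: coin_weight_def)

lemma abs_two_coin_weight_minus_1: "\<bar>2 * coin_weight \<gamma> j b - 1\<bar> = 2 * \<bar>\<gamma> (Suc j)\<bar>"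
  by (simp add: coin_weight_def abs_mult)

lemma cyl_weight_nonneg: "admissible \<gamma> \<Longrightarrow> 0 \<le> cyl_weight \<gamma> k"
  unfolding cyl_weight_def by (simp add: prod_nonneg coin_weight_pos less_imp_le)

lemma cyl_weight_snoc: "cyl_weight \<gamma> (k @ [b]) = cyl_weight \<gamma> k * coin_weight \<gamma> (length k) b"
  unfolding cyl_weight_def by (simp add: nth_append)

lemma partial_weight_nonneg: "admissible \<gamma> \<Longrightarrow> 0 \<le> partial_weight \<gamma> n x"
  unfolding partial_weight_def by (simp add: prod_nonneg coin_weight_pos less_imp_le)

lemma partial_weight_cyl:
  "x \<in> cyl k \<Longrightarrow> partial_weight \<gamma> (length k) x = 2 ^ length k * cyl_weight \<gamma> k"
  unfolding partial_weight_def cyl_weight_def by (simp add: cyl_def prod.distrib)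

lemma partial_weight_le:
  assumes a: "admissible \<gamma>"
  shows "partial_weight \<gamma> n x \<le> exp (\<Sum>j. 2 * \<bar>\<gamma> (Suc j)\<bar>)"
proof -
  have s: "summable (\<lambda>j. 2 * \<bar>\<gamma> (Suc j)\<bar>)" using a by (simp add: admissible_def)
  have "partial_weight \<gamma> n x \<le> (\<Prod>j<n. 1 + 2 * \<bar>\<gamma> (Suc j)\<bar>)"
    unfolding partial_weight_def
  proof (intro prod_mono conjI)
    fix j
    show "0 \<le> 2 * coin_weight \<gamma> j (seq_of_path x j)"
      using coin_weight_pos[OF a] by (simp add: less_imp_le)
    show "2 * coin_weight \<gamma> j (seq_of_path x j) \<le> 1 + 2 * \<bar>\<gamma> (Suc j)\<bar>"
      using abs_ge_self[of "2 * coin_weight \<gamma> j (seq_of_path x j) - 1"]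
      unfolding abs_two_coin_weight_minus_1 by linarith
  qed
  also have "\<dots> \<le> exp (\<Sum>j<n. 2 * \<bar>\<gamma> (Suc j)\<bar>)"
    by (rule prod_le_exp_sum) simp
  also have "\<dots> \<le> exp (\<Sum>j. 2 * \<bar>\<gamma> (Suc j)\<bar>)"
    using s by (simp add: sum_le_suminf)
  finally show ?thesis .
qed

lemma convergent_prod_two_coin_weight:
  assumes "admissible \<gamma>"
  shows "convergent_prod (\<lambda>j. 2 * coin_weight \<gamma> j (c j))"
proof (intro abs_convergent_prod_imp_convergent_prod summable_imp_abs_convergent_prod)
  show "summable (\<lambda>j. norm (2 * coin_weight \<gamma> j (c j) - 1))"
    using assms by (simp add: admissible_def abs_two_coin_weight_minus_1)
qed

lemma partial_weight_tendsto:
  assumes "admissible \<gamma>"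
  shows "(\<lambda>n. partial_weight \<gamma> n x) \<longlonglongrightarrow> gamma_weight \<gamma> x"
proof -
  have "(\<lambda>n. partial_weight \<gamma> (Suc n) x) \<longlonglongrightarrow> gamma_weight \<gamma> x"
    unfolding partial_weight_def gamma_weight_def lessThan_Suc_atMost
    by (rule convergent_prod_LIMSEQ[OF convergent_prod_two_coin_weight[OF assms]])
  then show ?thesis by (rule LIMSEQ_imp_Suc)
qed

lemma gamma_weight_pos:
  assumes a: "admissible \<gamma>"
  shows "0 < gamma_weight \<gamma> x"
proof -
  have "0 \<le> gamma_weight \<gamma> x"
    by (intro LIMSEQ_le_const[OF partial_weight_tendsto[OF a]]) (use partial_weight_nonneg[OF a] in blast)
  moreover have "gamma_weight \<gamma> x \<noteq> 0"
    unfolding gamma_weight_def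
    using coin_weight_pos[OF a]
    by (intro prodinf_nonzero[OF convergent_prod_two_coin_weight[OF a]]) (simp add: order_less_imp_not_eq2)
  ultimately show ?thesis by simp
qed

lemma measurable_seq_of_path_coord_fun [measurable]:
  "(\<lambda>x. f (seq_of_path x j) :: real) \<in> borel_measurable Linf_M"
  by (rule measurable_compose[OF measurable_seq_of_path_coord]) simp

lemma measurable_partial_weight [measurable]: "partial_weight \<gamma> n \<in> borel_measurable Linf_M"
  unfolding partial_weight_def[abs_def] by measurable

lemma positive_weight_gamma: "admissible \<gamma> \<Longrightarrow> positive_weight (gamma_weight \<gamma>)"
  unfolding positive_weight_def using gamma_weight_pos
  by (auto intro: borel_measurable_LIMSEQ_real[OF partial_weight_tendsto])

lemma indicator_cyl_split:
  "(indicator (cyl k) x :: real) = indicator (cyl (k @ [True])) x + indicator (cyl (k @ [False])) x"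
proof -
  have "x \<in> cyl (k @ [b]) \<longleftrightarrow> x \<in> cyl k \<and> seq_of_path x (length k) = b" for b
    by (auto simp: cyl_def nth_append less_Suc_eq)
  then show ?thesis by (cases "seq_of_path x (length k)") (auto simp: indicator_def)
qed

lemma nn_integral_partial_weight_cyl:
  assumes a: "admissible \<gamma>"
  shows "(\<integral>\<^sup>+ x. ennreal (partial_weight \<gamma> (d + length k) x * indicator (cyl k) x) \<partial>uniform_measure)
    = ennreal (cyl_weight \<gamma> k)"
proof (induct d arbitrary: k)
  case 0
  have "(\<integral>\<^sup>+ x. ennreal (partial_weight \<gamma> (length k) x * indicator (cyl k) x) \<partial>uniform_measure) =
      (\<integral>\<^sup>+ x. ennreal (2 ^ length k * cyl_weight \<gamma> k) * indicator (cyl k) x \<partial>uniform_measure)"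
    by (intro nn_integral_cong) (simp add: partial_weight_cyl indicator_def)
  also have "\<dots> = ennreal (2 ^ length k * cyl_weight \<gamma> k) * emeasure uniform_measure (cyl k)"
    by (rule nn_integral_cmult_indicator) simp
  also have "\<dots> = ennreal (2 ^ length k * cyl_weight \<gamma> k * (1/2) ^ length k)"
    using cyl_weight_nonneg[OF a] by (simp add: emeasure_uniform_cyl ennreal_mult'[symmetric])
  also have "2 ^ length k * cyl_weight \<gamma> k * (1/2) ^ length k = cyl_weight \<gamma> k"
    by (simp add: power_one_over)
  finally show ?case by simp
next
  case (Suc d)
  let ?I = "\<lambda>b. \<integral>\<^sup>+ x. ennreal (partial_weight \<gamma> (d + length (k @ [b])) x * indicator (cyl (k @ [b])) x) \<partial>uniform_measure"
  have "(\<integral>\<^sup>+ x. ennreal (partial_weight \<gamma> (Suc d + length k) x * indicator (cyl k) x) \<partial>uniform_measure)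
      = ?I True + ?I False"
    using partial_weight_nonneg[OF a]
    by (subst nn_integral_add[symmetric]) (auto intro!: nn_integral_cong ennreal_plus
        simp: indicator_cyl_split[of k] distrib_left)
  also have "\<dots> = ennreal (cyl_weight \<gamma> k * coin_weight \<gamma> (length k) True + cyl_weight \<gamma> k * coin_weight \<gamma> (length k) False)"
    unfolding Suc cyl_weight_snoc
    using cyl_weight_nonneg[OF a] coin_weight_pos[OF a] by (simp add: less_imp_le ennreal_plus)
  also have "\<dots> = ennreal (cyl_weight \<gamma> k)"
    using coin_weight_sum[of \<gamma> "length k"] by (simp add: distrib_left[symmetric])
  finally show ?case .
qed

lemma emeasure_gamma_cyl:
  assumes a: "admissible \<gamma>"
  shows "emeasure (uniform_density (gamma_weight \<gamma>)) (cyl k) = ennreal (cyl_weight \<gamma> k)"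
proof -
  have [measurable]: "gamma_weight \<gamma> \<in> borel_measurable Linf_M"
    using positive_weight_gamma[OF a] by (rule positive_weight_measurable)
  define C where "C = exp (\<Sum>j. 2 * \<bar>\<gamma> (Suc j)\<bar>)"
  let ?u = "\<lambda>i x. ennreal (partial_weight \<gamma> (i + length k) x * indicator (cyl k) x)"
  have "(\<lambda>i. integral\<^sup>N uniform_measure (?u i)) \<longlonglongrightarrow>
      (\<integral>\<^sup>+ x. ennreal (gamma_weight \<gamma> x * indicator (cyl k) x) \<partial>uniform_measure)"
  proof (rule nn_integral_dominated_convergence[where w="\<lambda>_. ennreal C"])
    show "AE x in uniform_measure. ?u i x \<le> ennreal C" for i
      using partial_weight_le[OF a] partial_weight_nonneg[OF a]
      by (intro AE_I2 ennreal_leI) (auto simp: indicator_def C_def)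
    show "(\<integral>\<^sup>+ x. ennreal C \<partial>uniform_measure) < \<infinity>"
      using emeasure_uniform_finite[of Linf] by (simp add: ennreal_mult_less_top top.not_eq_extremum)
    show "AE x in uniform_measure. (\<lambda>i. ?u i x) \<longlonglongrightarrow> ennreal (gamma_weight \<gamma> x * indicator (cyl k) x)"
      by (intro AE_I2 tendsto_ennrealI tendsto_mult_right LIMSEQ_ignore_initial_segment
          partial_weight_tendsto a)
  qed simp_all
  then have "(\<integral>\<^sup>+ x. ennreal (gamma_weight \<gamma> x * indicator (cyl k) x) \<partial>uniform_measure) = ennreal (cyl_weight \<gamma> k)"
    by (simp add: nn_integral_partial_weight_cyl[OF a] LIMSEQ_const_iff)
  then show ?thesis
    unfolding uniform_density_def
    by (subst emeasure_density) (auto simp: ennreal_mult indicator_def intro!: nn_integral_cong elim!: subst)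
qed

lemma prod_alpha_eq: "(\<Prod>i\<in>{1..n}. alpha \<gamma> g i) = cyl_weight \<gamma> (map (\<lambda>j. g (Suc j) = odd j) [0..<n])"
proof -
  have q: "coin_weight \<gamma> j (g (Suc j) = odd j) = alpha \<gamma> g (Suc j)" for j
    by (cases "g (Suc j)") (simp_all add: coin_weight_def alpha_def)
  have "cyl_weight \<gamma> (map (\<lambda>j. g (Suc j) = odd j) [0..<n]) = (\<Prod>j<n. alpha \<gamma> g (Suc j))"
    unfolding cyl_weight_def by (rule prod.cong) (simp_all add: q)
  also have "\<dots> = (\<Prod>i\<in>{1..n}. alpha \<gamma> g i)"
    using prod.atLeast1_atMost_eq[of "alpha \<gamma> g" n] by simp
  finally show ?thesis by simp
qed

lemma Zc_std_path_eq: "Zc (std_path g n) = cyl (map (\<lambda>j. g (Suc j) = odd j) [0..<n])"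
  by (rule Zc_eq_cyl[OF std_path_eq]) simp

lemma gamma_measure_gamma_weight: "admissible \<gamma> \<Longrightarrow> gamma_measure \<gamma> (uniform_density (gamma_weight \<gamma>))"
  unfolding gamma_measure_def
proof (intro conjI allI)
  assume a: "admissible \<gamma>"
  show "sets (uniform_density (gamma_weight \<gamma>)) = sets Linf_M" by simp
  show "prob_space (uniform_density (gamma_weight \<gamma>))"
    by (rule prob_spaceI) (simp add: emeasure_gamma_cyl[OF a, of "[]", unfolded cyl_Nil] cyl_weight_def)
  fix n g show "emeasure (uniform_density (gamma_weight \<gamma>)) (Zc (std_path g n)) = ennreal (\<Prod>i\<in>{1..n}. alpha \<gamma> g i)"
    by (subst prod_alpha_eq) (simp add: Zc_std_path_eq emeasure_gamma_cyl[OF a])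
qed

lemma cyl_eq_Zc_std_path: "\<exists>g. cyl k = Zc (std_path g (length k))"
proof
  define g where "g i = (k ! (i - 1) = odd (i - 1))" for i
  have "map (\<lambda>j. g (Suc j) = odd j) [0..<length k] = k"
    by (rule nth_equalityI) (auto simp: g_def)
  then show "cyl k = Zc (std_path g (length k))" by (simp add: Zc_std_path_eq)
qed

lemma gamma_measure_unique:
  assumes \<mu>: "gamma_measure \<gamma> \<mu>" and \<nu>: "gamma_measure \<gamma> \<nu>"
  shows "\<mu> = \<nu>"
proof (rule Linf_measure_eqI)
  show "sets \<mu> = sets Linf_M" "sets \<nu> = sets Linf_M" using \<mu> \<nu> by (simp_all add: gamma_measure_def)
  then show "emeasure \<mu> Linf \<noteq> \<infinity>"
    using prob_space.emeasure_space_1[of \<mu>] \<mu> sets_eq_imp_space_eq[of \<mu> Linf_M]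
    by (simp add: gamma_measure_def)
  fix k
  obtain g where "cyl k = Zc (std_path g (length k))" using cyl_eq_Zc_std_path by blast
  then show "emeasure \<mu> (cyl k) = emeasure \<nu> (cyl k)"
    using \<mu> \<nu> by (simp add: gamma_measure_def)
qed

lemma gamma_measure_iff:
  "admissible \<gamma> \<Longrightarrow> gamma_measure \<gamma> \<mu> \<longleftrightarrow> \<mu> = uniform_density (gamma_weight \<gamma>)"
  using gamma_measure_gamma_weight gamma_measure_unique by blast

section \<open>The Perron-Frobenius measure\<close>

lemma Lam_deg_10: "Lam_deg (1, 0) = {(1, 0, [True]), (1, 0, [False])}"
proof (intro subset_antisym subsetI)
  fix l assume "l \<in> Lam_deg (1, 0)"
  then obtain k where l: "l = (1, 0, k)" "length k = 1" by (auto simp: Lam_deg_def Lam_def deg_def)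
  then obtain v where "k = [v]" by (auto simp: length_Suc_conv)
  then show "l \<in> {(1, 0, [True]), (1, 0, [False])}" using l by (cases v) auto
qed (auto simp: Lam_deg_def Lam_def deg_def)

lemma Lam_deg_01: "Lam_deg (0, 1) = {(0, 1, [])}"
  by (auto simp: Lam_deg_def Lam_def deg_def)

lemma vertex_matrix_entries: "vertex_matrix_entry (1, 0) = 2" "vertex_matrix_entry (0, 1) = 1"
  unfolding vertex_matrix_entry_def Lam_deg_10 Lam_deg_01 by simp_all

lemma PF_measure_Zc: "PF_measure M \<Longrightarrow> l \<in> Lam \<Longrightarrow> emeasure M (Zc l) = ennreal (2 powr (- real (fst (deg l))))"
  unfolding PF_measure_def vertex_matrix_entries by simp

lemma two_powr_minus: "(2::real) powr (- real n) = (1/2) ^ n"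
  by (simp add: powr_minus powr_realpow power_one_over inverse_eq_divide)

lemma PF_measure_eq_uniform:
  assumes "PF_measure M" shows "M = uniform_measure"
proof -
  have "uniform_measure = M"
  proof (rule Linf_measure_eqI)
    show "sets uniform_measure = sets Linf_M" by simp
    show "sets M = sets Linf_M" using assms by (simp add: PF_measure_def)
    show "emeasure uniform_measure Linf \<noteq> \<infinity>" using emeasure_uniform_finite[of Linf] by simp
    fix k
    have l: "(length k, 0, k) \<in> Lam" by (simp add: Lam_def)
    have "cyl k = Zc (length k, 0, k)" by (rule Zc_eq_cyl[symmetric]) simp_all
    then have "emeasure M (cyl k) = ennreal ((1/2) ^ length k)"
      using PF_measure_Zc[OF assms l] by (simp add: deg_def two_powr_minus)
    then show "emeasure uniform_measure (cyl k) = emeasure M (cyl k)" by (simp add: emeasure_uniform_cyl)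
  qed
  then show ?thesis by simp
qed

lemma positive_weight_1: "positive_weight (\<lambda>_. 1)"
  unfolding positive_weight_def by simp

lemma uniform_density_1: "uniform_density (\<lambda>_. 1) = uniform_measure"
  unfolding uniform_density_def by (simp add: density_1)

theorem mainTheorem7:
  fixes \<gamma> :: "nat \<Rightarrow> real"
  assumes "admissible \<gamma>"
  shows "(\<exists>!\<mu>. gamma_measure \<gamma> \<mu>)
    \<and> (\<forall>\<mu>. gamma_measure \<gamma> \<mu> \<longrightarrow> SBFS \<mu> D_std pre_std code_std)
    \<and> (\<forall>M. PF_measure M \<longrightarrow> (\<forall>l\<in>Lam. emeasure M (Zc l) = ennreal (2 powr (- real (fst (deg l))))))
    \<and> (\<forall>\<mu> M. gamma_measure \<gamma> \<mu> \<longrightarrow> PF_measure M \<longrightarrow>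
          absolutely_continuous \<mu> M \<and> absolutely_continuous M \<mu>)
    \<and> (\<forall>\<mu> M. gamma_measure \<gamma> \<mu> \<longrightarrow> PF_measure M \<longrightarrow> std_rep_equiv \<mu> M)
    \<and> (\<forall>\<gamma>' \<mu> \<mu>'. admissible \<gamma>' \<longrightarrow> gamma_measure \<gamma> \<mu> \<longrightarrow> gamma_measure \<gamma>' \<mu>' \<longrightarrow>
          std_rep_equiv \<mu> \<mu>')"
proof (intro conjI allI impI ballI)
  note \<mu>_eq = gamma_measure_iff[OF assms]
  note H = positive_weight_gamma[OF assms]
  show "\<exists>!\<mu>. gamma_measure \<gamma> \<mu>" unfolding \<mu>_eq by blast
  show "gamma_measure \<gamma> \<mu> \<Longrightarrow> SBFS \<mu> D_std pre_std code_std" for \<mu>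
    unfolding \<mu>_eq using SBFS_uniform_density[OF H] by simp
  show "PF_measure M \<Longrightarrow> l \<in> Lam \<Longrightarrow> emeasure M (Zc l) = ennreal (2 powr (- real (fst (deg l))))"
    for M l by (rule PF_measure_Zc)
  fix \<mu> M assume \<mu>: "gamma_measure \<gamma> \<mu>" and M: "PF_measure M"
  then have eq: "\<mu> = uniform_density (gamma_weight \<gamma>)" "M = uniform_density (\<lambda>_. 1)"
    using \<mu>_eq PF_measure_eq_uniform uniform_density_1 by auto
  show "absolutely_continuous \<mu> M" "absolutely_continuous M \<mu>"
    unfolding eq absolutely_continuous_def null_sets_uniform_density[OF H] null_sets_uniform_density[OF positive_weight_1]
    by simp_all
  show "std_rep_equiv \<mu> M"
    unfolding eq by (rule std_rep_equiv_uniform_density[OF H positive_weight_1])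
next
  fix \<gamma>' \<mu> \<mu>' assume "admissible \<gamma>'" "gamma_measure \<gamma> \<mu>" "gamma_measure \<gamma>' \<mu>'"
  then show "std_rep_equiv \<mu> \<mu>'"
    using std_rep_equiv_uniform_density[OF positive_weight_gamma[OF assms] positive_weight_gamma]
    by (simp add: gamma_measure_iff assms)
qed

end
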